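(* Let $g:[a,b]\to\mathbb R$ be a derivator. Then ${\rm P}_g$ is dense in $L^2_g([a,b])$ if and only if ${\rm P}_g$ is dense in $\mathrm{UC}_g([a,b])$ (with respect to the supremum norm).
   Context: $\mathbb F\in\{\mathbb R,\mathbb C\}$. A derivator is a nondecreasing, left-continuous $g:[a,b]\to\mathbb R$; $\mu_g$ is its Lebesgue–Stieltjes measure ($\mu_g([c,d))=g(d)-g(c)$). For $x_0\in[a,b]$, the $g$-monomials centered at $x_0$ are $g_{x_0,0}\equiv1$, $g_{x_0,n}(x)=n\int_{[x_0,x)}g_{x_0,n-1}\,d\mu_g$ for $x\ge x_0$ and $g_{x_0,n}(x)=-n\int_{[x,x_0)}g_{x_0,n-1}\,d\mu_g$ for $x<x_0$. ${\rm P}_g$ is the space of finite $\mathbb F$-linear combinations of $g$-monomials ($g$-polynomials). $L^2_g([a,b])$ is the Hilbert space of $\mu_g$-measurable $f:[a,b]\to\mathbb F$ with $\int_{[a,b)}|f|^2d\mu_g<\infty$. $\mathrm{UC}_g([a,b])$ is the Banach space (supremum norm) of uniformly $g$-continuous functions $f:[a,b]\to\mathbb F$: for every $\varepsilon>0$ there is $\delta>0$ with $|g(x)-g(y)|<\delta\Rightarrow|f(x)-f(y)|<\varepsilon$ for all $x,y$. *)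

theory Defs
  imports "HOL-Analysis.Analysis"
begin

definition derivator :: "(real \<Rightarrow> real) \<Rightarrow> real \<Rightarrow> real \<Rightarrow> bool" where
  "derivator g a b \<longleftrightarrow> a < b \<and> mono_on {a..b} g \<and>
     (\<forall>x\<in>{a<..b}. continuous (at_left x) g)"

definition gext :: "(real \<Rightarrow> real) \<Rightarrow> real \<Rightarrow> real \<Rightarrow> real \<Rightarrow> real" where
  "gext g a b x = g (max a (min b x))"

definition LS_measure :: "(real \<Rightarrow> real) \<Rightarrow> real \<Rightarrow> real \<Rightarrow> real measure" where
  "LS_measure g a b =
     extend_measure UNIV {(c, d). c \<le> d} (\<lambda>(c, d). {c..<d})
       (\<lambda>(c, d). ennreal (gext g a b d - gext g a b c))"

fun gmono :: "(real \<Rightarrow> real) \<Rightarrow> real \<Rightarrow> real \<Rightarrow> real \<Rightarrow> nat \<Rightarrow> real \<Rightarrow> real" where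
  "gmono g a b x0 0 x = 1"
| "gmono g a b x0 (Suc n) x =
     (if x0 \<le> x
      then real (Suc n) * (LINT y:{x0..<x}|LS_measure g a b. gmono g a b x0 n y)
      else - real (Suc n) * (LINT y:{x..<x0}|LS_measure g a b. gmono g a b x0 n y))"

definition gpolys :: "(real \<Rightarrow> real) \<Rightarrow> real \<Rightarrow> real \<Rightarrow> (real \<Rightarrow> 'f::real_normed_field) set" where
  "gpolys g a b = {p. \<exists>S c. finite S \<and> S \<subseteq> {a..b} \<times> UNIV \<and>
      p = (\<lambda>x. \<Sum>(x0, n)\<in>S. c (x0, n) * of_real (gmono g a b x0 n x))}"

definition in_L2g :: "(real \<Rightarrow> real) \<Rightarrow> real \<Rightarrow> real \<Rightarrow> (real \<Rightarrow> 'f::real_normed_field) \<Rightarrow> bool" where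
  "in_L2g g a b f \<longleftrightarrow> f \<in> borel_measurable (completion (LS_measure g a b)) \<and>
     (\<integral>\<^sup>+ x \<in> {a..<b}. ennreal ((norm (f x))\<^sup>2) \<partial>LS_measure g a b) < \<infinity>"

definition dense_L2g :: "(real \<Rightarrow> real) \<Rightarrow> real \<Rightarrow> real \<Rightarrow> (real \<Rightarrow> 'f::real_normed_field) set \<Rightarrow> bool" where
  "dense_L2g g a b P \<longleftrightarrow> (\<forall>f. in_L2g g a b f \<longrightarrow> (\<forall>e>0. \<exists>p\<in>P.
     (\<integral>\<^sup>+ x \<in> {a..<b}. ennreal ((norm (f x - p x))\<^sup>2) \<partial>LS_measure g a b) < ennreal e))"

definition UCg :: "(real \<Rightarrow> real) \<Rightarrow> real \<Rightarrow> real \<Rightarrow> (real \<Rightarrow> 'f::real_normed_field) \<Rightarrow> bool" where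
  "UCg g a b f \<longleftrightarrow> (\<forall>e>0. \<exists>d>0. \<forall>x\<in>{a..b}. \<forall>y\<in>{a..b}.
      \<bar>g x - g y\<bar> < d \<longrightarrow> norm (f x - f y) < e)"

definition dense_UCg :: "(real \<Rightarrow> real) \<Rightarrow> real \<Rightarrow> real \<Rightarrow> (real \<Rightarrow> 'f::real_normed_field) set \<Rightarrow> bool" where
  "dense_UCg g a b P \<longleftrightarrow> (\<forall>f. UCg g a b f \<longrightarrow> (\<forall>e>0. \<exists>p\<in>P.
     (SUP x\<in>{a..b}. ereal (norm (f x - p x))) < ereal e))"

end

theory Submission
  imports Defs
begin

text \<open>Both implications compare the two norms through \<open>g\<close>-primitives
  \<open>x \<mapsto> \<integral>\<^bsub>[a,x)\<^esub> h d\<mu>\<^sub>g\<close>.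

  If \<open>P\<^sub>g\<close> is dense in \<open>L\<^sup>2\<^sub>g\<close>: a uniformly \<open>g\<close>-continuous \<open>f\<close> is uniformly close to
  \<open>f(a)\<close> plus the \<open>g\<close>-primitive of a bounded \<open>h\<close>, obtained by interpolating \<open>f\<close> linearly in
  \<open>g\<close> along a partition on which \<open>g\<close> rises by less than \<open>\<eta>\<close> except at jumps. Replacing \<open>h\<close>
  by an \<open>L\<^sup>2\<^sub>g\<close>-close \<open>g\<close>-polynomial moves the primitive uniformly by little, and
  \<open>g\<close>-primitives of \<open>g\<close>-polynomials are \<open>g\<close>-polynomials.

  Conversely, \<open>\<mu>\<^sub>g\<close> is finite, so uniform approximation implies \<open>L\<^sup>2\<^sub>g\<close>-approximation,
  and it suffices that \<open>UC\<^sub>g\<close> is dense in \<open>L\<^sup>2\<^sub>g\<close>. The indicator of \<open>{..<c}\<close> is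
  \<open>L\<^sup>1\<close>-approximated by the \<open>g\<close>-continuous ramps \<open>min 1 (max 0 ((g c - g x) / \<eta>))\<close>;
  a Dynkin argument extends this to all measurable sets, hence to simple functions.\<close>

section \<open>The Lebesgue--Stieltjes measure of a derivator\<close>

lemma sets_LS_measure [simp, measurable_cong]: "sets (LS_measure g a b) = sets borel"
  apply (simp add: sets_extend_measure LS_measure_def borel_eq_atLeastLessThan image_def
      split: prod.split)
  by (metis atLeastLessThan_empty nle_le)

lemma space_LS_measure [simp]: "space (LS_measure g a b) = UNIV"
  by (simp add: LS_measure_def space_extend_measure)

locale derivator_interval =
  fixes g :: "real \<Rightarrow> real" and a b :: real
  assumes derivator: "derivator g a b"
begin

abbreviation M :: "real measure" where "M \<equiv> LS_measure g a b"

lemma a_less_b: "a < b"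
  using derivator by (simp add: derivator_def)

lemma g_mono: "a \<le> x \<Longrightarrow> x \<le> y \<Longrightarrow> y \<le> b \<Longrightarrow> g x \<le> g y"
  using derivator by (auto simp: derivator_def mono_on_def)

lemma gext_mono: "x \<le> y \<Longrightarrow> gext g a b x \<le> gext g a b y"
  using a_less_b by (auto simp: gext_def intro!: g_mono)

lemma gext_eq: "x \<in> {a..b} \<Longrightarrow> gext g a b x = g x"
  by (simp add: gext_def)

lemma borel_measurable_gext [measurable]: "gext g a b \<in> borel_measurable borel"
  by (rule borel_measurable_mono) (auto simp: mono_def intro: gext_mono)

lemma gext_continuous_at_left: "continuous (at_left x) (gext g a b)"
proof -
  have left_cont: "continuous (at_left x) g" if "x \<in> {a<..b}" for x
    using derivator that by (auto simp: derivator_def)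
  consider "x \<le> a" | "a < x" "x \<le> b" | "b < x" by linarith
  then show ?thesis
  proof cases
    case 1
    have "\<forall>\<^sub>F y in at_left x. gext g a b y = gext g a b x"
      unfolding eventually_at_left_field using 1
      by (auto simp: gext_def intro!: exI[of _ "x - 1"])
    then show ?thesis
      unfolding continuous_within by (simp add: tendsto_eventually)
  next
    case 2
    have "\<forall>\<^sub>F y in at_left x. g y = gext g a b y"
      unfolding eventually_at_left_field using 2 by (auto simp: gext_def intro!: exI[of _ a])
    moreover have "(g \<longlongrightarrow> g x) (at_left x)"
      using left_cont 2 by (auto simp: continuous_within)
    ultimately have "(gext g a b \<longlongrightarrow> g x) (at_left x)"
      by (metis Lim_transform_eventually)
    then show ?thesis
      using 2 by (simp add: continuous_within gext_def)
  next
    case 3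
    have "\<forall>\<^sub>F y in at_left x. gext g a b y = gext g a b x"
      unfolding eventually_at_left_field using 3 by (auto simp: gext_def intro!: exI[of _ b])
    then show ?thesis
      unfolding continuous_within by (simp add: tendsto_eventually)
  qed
qed

text \<open>The library builds \<open>interval_measure F\<close> from a right-continuous \<open>F\<close> on the intervals
  \<open>{c<..d}\<close>; reflecting the left-continuous \<open>gext\<close> produces the intervals \<open>{c..<d}\<close>.\<close>

lemma emeasure_Ico:
  assumes "c \<le> d"
  shows "emeasure M {c..<d} = ennreal (gext g a b d - gext g a b c)"
proof -
  define F where "F x = - gext g a b (-x)" for x
  have F_mono: "F x \<le> F y" if "x \<le> y" for x y
    using gext_mono[of "-y" "-x"] that by (simp add: F_def)
  have F_right_cont: "continuous (at_right x) F" for x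
  proof -
    have "(gext g a b \<longlongrightarrow> gext g a b (-x)) (at_left (-x))"
      using gext_continuous_at_left[of "-x"] by (simp add: continuous_within)
    then have "((\<lambda>y. gext g a b (- y)) \<longlongrightarrow> gext g a b (-x)) (at_right x)"
      by (simp add: at_left_minus filterlim_filtermap)
    then show ?thesis
      unfolding F_def continuous_within by (intro tendsto_minus)
  qed
  define N where "N = distr (interval_measure F) borel uminus"
  have emeasure_N: "emeasure N {c..<d} = ennreal (gext g a b d - gext g a b c)"
    if "c \<le> d" for c d
  proof -
    have "uminus -` {c..<d} \<inter> space (interval_measure F) = {-d<..-c}" by auto
    then have "emeasure N {c..<d} = emeasure (interval_measure F) {-d<..-c}"
      by (simp add: N_def emeasure_distr)
    also have "\<dots> = F (-c) - F (-d)"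
      using that by (intro emeasure_interval_measure_Ioc F_mono F_right_cont) auto
    finally show ?thesis by (simp add: F_def)
  qed
  show ?thesis
  proof (rule emeasure_extend_measure_Pair[OF LS_measure_def, where \<mu>'="emeasure N"])
    show "countably_additive (sets M) (emeasure N)"
      using measure_space[of N] by (simp add: measure_space_def N_def)
  qed (use assms emeasure_N in \<open>auto simp: positive_def N_def\<close>)
qed

lemma null_sets_outside: "UNIV - {a..<b} \<in> null_sets M"
proof -
  have "UNIV - {a..<b} = (\<Union>n::nat. {a - real n..<a}) \<union> (\<Union>n::nat. {b..<b + real n})"
  proof -
    have "\<exists>n::nat. a - real n \<le> x" for x
      using reals_Archimedean2[of "a - x"] by (metis diff_le_eq less_eq_real_def add.commute diff_less_eq)
    moreover have "\<exists>n::nat. x < b + real n" for x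
      using reals_Archimedean2[of "x - b"] by (metis add.commute diff_less_eq)
    ultimately show ?thesis by (auto simp: not_less)
  qed
  moreover have "{a - real n..<a} \<in> null_sets M" "{b..<b + real n} \<in> null_sets M" for n
    using emeasure_Ico[of "a - real n" a] emeasure_Ico[of b "b + real n"] a_less_b
    by (auto simp: null_sets_def gext_def)
  ultimately show ?thesis
    by (metis null_sets.Un null_sets_UN)
qed

lemma emeasure_UNIV: "emeasure M UNIV = ennreal (g b - g a)"
proof -
  have "emeasure M UNIV = emeasure M {a..<b}"
    using null_sets_outside by (intro emeasure_eq_AE) (auto intro!: AE_I[of _ _ "UNIV - {a..<b}"])
  also have "\<dots> = ennreal (g b - g a)"
    using emeasure_Ico[of a b] a_less_b by (simp add: gext_def)
  finally show ?thesis .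
qed

sublocale finite_measure M
  by (rule finite_measureI) (simp add: emeasure_UNIV)

lemma measure_Ico: "a \<le> c \<Longrightarrow> c \<le> d \<Longrightarrow> d \<le> b \<Longrightarrow> measure M {c..<d} = g d - g c"
  using emeasure_Ico[of c d] g_mono[of c d] by (simp add: measure_def gext_eq)

section \<open>\<open>g\<close>-monomials and \<open>g\<close>-polynomials\<close>

lemma integrable_bounded:
  fixes h :: "real \<Rightarrow> 'f::{banach, second_countable_topology}"
  assumes "h \<in> borel_measurable borel" "\<And>x. norm (h x) \<le> B"
  shows "integrable M h"
  by (rule integrable_const_bound[where B=B]) (use assms in auto)

lemma abs_set_integral_le:
  fixes h :: "real \<Rightarrow> real"
  assumes "h \<in> borel_measurable borel" "\<And>x. \<bar>h x\<bar> \<le> B" "S \<in> sets borel"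
  shows "\<bar>LINT y:S|M. h y\<bar> \<le> B * measure M UNIV"
proof -
  have "0 \<le> B" using assms(2)[of 0] by linarith
  have "\<bar>LINT y:S|M. h y\<bar> \<le> (\<integral>y. \<bar>indicator S y * h y\<bar> \<partial>M)"
    unfolding set_lebesgue_integral_def by (simp add: integral_abs_bound)
  also have "\<dots> \<le> (\<integral>y. B \<partial>M)"
    using assms \<open>0 \<le> B\<close>
    by (intro integral_mono integrable_bounded[where B=B]) (auto simp: indicator_def abs_mult)
  finally show ?thesis by (simp add: mult.commute)
qed

lemma set_integral_lessThan_split:
  fixes h :: "real \<Rightarrow> real"
  assumes "integrable M h" "u \<le> v"
  shows "(LINT y:{..<v}|M. h y) = (LINT y:{..<u}|M. h y) + (LINT y:{u..<v}|M. h y)"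
proof -
  have "set_integrable M S h" if "S \<in> sets borel" for S
    unfolding set_integrable_def using that assms by (intro integrable_mult_indicator) auto
  moreover have "{..<v} = {..<u} \<union> {u..<v}" using assms by auto
  ultimately show ?thesis
    by (simp add: set_integral_Un ivl_disj_int)
qed

lemma gmono_Suc_eq_diff:
  assumes "integrable M (gmono g a b x0 n)"
  shows "gmono g a b x0 (Suc n) x = real (Suc n) *
    ((LINT y:{..<x}|M. gmono g a b x0 n y) - (LINT y:{..<x0}|M. gmono g a b x0 n y))"
  using set_integral_lessThan_split[OF assms, of x0 x] set_integral_lessThan_split[OF assms, of x x0]
  by (cases "x0 \<le> x") (simp_all del: of_nat_Suc add: algebra_simps)

lemma borel_measurable_set_integral_lessThan:
  fixes h :: "real \<Rightarrow> real"
  assumes [measurable]: "h \<in> borel_measurable borel"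
  shows "(\<lambda>x. LINT y:{..<x}|M. h y) \<in> borel_measurable borel"
proof -
  have "(\<lambda>(x, y). indicator {..<x} y *\<^sub>R h y) \<in> borel_measurable (borel \<Otimes>\<^sub>M borel)"
    by (simp add: indicator_def split_beta') measurable
  then have "(\<lambda>(x, y). indicator {..<x} y *\<^sub>R h y) \<in> borel_measurable (borel \<Otimes>\<^sub>M M)"
    by (subst measurable_cong_sets[OF sets_pair_measure_cong[OF refl sets_LS_measure] refl])
  then show ?thesis
    unfolding set_lebesgue_integral_def by (rule borel_measurable_lebesgue_integral)
qed

lemma gmono_borel_bounded:
  "gmono g a b x0 n \<in> borel_measurable borel \<and> (\<exists>B. \<forall>x. \<bar>gmono g a b x0 n x\<bar> \<le> B)"
proof (induction n)
  case 0
  then show ?case by (auto intro!: exI[of _ 1])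
next
  case (Suc n)
  then obtain B where [measurable]: "gmono g a b x0 n \<in> borel_measurable borel"
    and B: "\<And>x. \<bar>gmono g a b x0 n x\<bar> \<le> B" by blast
  have "gmono g a b x0 (Suc n) = (\<lambda>x. real (Suc n) *
    ((LINT y:{..<x}|M. gmono g a b x0 n y) - (LINT y:{..<x0}|M. gmono g a b x0 n y)))"
    using B by (intro ext gmono_Suc_eq_diff integrable_bounded[where B=B]) auto
  then have "gmono g a b x0 (Suc n) \<in> borel_measurable borel"
    using borel_measurable_set_integral_lessThan by simp
  moreover have "\<bar>gmono g a b x0 (Suc n) x\<bar> \<le> real (Suc n) * (B * measure M UNIV)" for x
    using abs_set_integral_le[of "gmono g a b x0 n" B "{x0..<x}"]
      abs_set_integral_le[of "gmono g a b x0 n" B "{x..<x0}"] B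
    by (auto simp: abs_mult simp del: of_nat_Suc intro!: mult_left_mono)
  ultimately show ?case by blast
qed

lemma borel_measurable_gmono [measurable]: "gmono g a b x0 n \<in> borel_measurable borel"
  using gmono_borel_bounded by blast

lemma integrable_gmono: "integrable M (gmono g a b x0 n)"
proof -
  obtain B where "\<And>x. \<bar>gmono g a b x0 n x\<bar> \<le> B"
    using gmono_borel_bounded by blast
  then show ?thesis
    by (intro integrable_bounded[where B=B]) auto
qed

lemma set_integral_gmono:
  assumes "a \<le> x"
  shows "(LINT y:{a..<x}|M. gmono g a b x0 n y) =
    (gmono g a b x0 (Suc n) x - gmono g a b x0 (Suc n) a) / real (Suc n)"
proof -
  let ?I = "\<lambda>x. LINT y:{..<x}|M. gmono g a b x0 n y"
  have "gmono g a b x0 (Suc n) x - gmono g a b x0 (Suc n) a = real (Suc n) * (?I x - ?I a)"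
    by (simp only: gmono_Suc_eq_diff[OF integrable_gmono]) (simp add: algebra_simps del: of_nat_Suc)
  moreover have "(LINT y:{a..<x}|M. gmono g a b x0 n y) = ?I x - ?I a"
    using set_integral_lessThan_split[OF integrable_gmono assms] by simp
  ultimately show ?thesis
    by (simp del: of_nat_Suc gmono.simps)
qed

end

lemma gpolys_monomial:
  "x0 \<in> {a..b} \<Longrightarrow> (\<lambda>x. c * of_real (gmono g a b x0 n x)) \<in> gpolys g a b"
  unfolding gpolys_def by (intro CollectI exI[of _ "{(x0, n)}"] exI[of _ "\<lambda>_. c"]) auto

lemma gpolys_const: "a \<le> b \<Longrightarrow> (\<lambda>x. c) \<in> gpolys g a b"
  using gpolys_monomial[of a a b c g 0] by simp

lemma gpolys_add:
  assumes "p \<in> gpolys g a b" "q \<in> gpolys g a b"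
  shows "(\<lambda>x. p x + q x) \<in> gpolys g a b"
proof -
  obtain S1 c1 where S1: "finite S1" "S1 \<subseteq> {a..b} \<times> UNIV"
    "p = (\<lambda>x. \<Sum>(x0, n)\<in>S1. c1 (x0, n) * of_real (gmono g a b x0 n x))"
    using assms(1) unfolding gpolys_def by blast
  obtain S2 c2 where S2: "finite S2" "S2 \<subseteq> {a..b} \<times> UNIV"
    "q = (\<lambda>x. \<Sum>(x0, n)\<in>S2. c2 (x0, n) * of_real (gmono g a b x0 n x))"
    using assms(2) unfolding gpolys_def by blast
  define c where "c s = (if s \<in> S1 then c1 s else 0) + (if s \<in> S2 then c2 s else 0)" for s
  have "(\<Sum>s\<in>S1 \<union> S2. c s * of_real (gmono g a b (fst s) (snd s) x)) =
      (\<Sum>s\<in>S1 \<union> S2. if s \<in> S1 then c1 s * of_real (gmono g a b (fst s) (snd s) x) else 0) +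
      (\<Sum>s\<in>S1 \<union> S2. if s \<in> S2 then c2 s * of_real (gmono g a b (fst s) (snd s) x) else 0)" for x
    unfolding sum.distrib[symmetric] by (rule sum.cong) (auto simp: c_def distrib_right)
  also have "\<dots> x = p x + q x" for x
  proof -
    have "(S1 \<union> S2) \<inter> S1 = S1" "(S1 \<union> S2) \<inter> S2 = S2" by auto
    then show ?thesis
      using S1 S2 by (simp add: sum.inter_restrict[symmetric] split_def)
  qed
  finally show ?thesis
    unfolding gpolys_def using S1 S2
    by (intro CollectI exI[of _ "S1 \<union> S2"] exI[of _ c]) (auto simp: split_def)
qed

lemma gpolys_sum:
  assumes "finite T" "a \<le> b" "\<And>t. t \<in> T \<Longrightarrow> f t \<in> gpolys g a b"
  shows "(\<lambda>x. \<Sum>t\<in>T. f t x) \<in> gpolys g a b"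
  using assms by (induction T rule: finite_induct) (auto intro: gpolys_const gpolys_add)

context derivator_interval
begin

definition gprim :: "(real \<Rightarrow> 'f::{banach, second_countable_topology}) \<Rightarrow> real \<Rightarrow> 'f" where
  "gprim h x = (\<integral>y. indicator {a..<x} y *\<^sub>R h y \<partial>M)"

lemma gpoly_borel_bounded:
  fixes p :: "real \<Rightarrow> 'f::{real_normed_field, second_countable_topology}"
  assumes "p \<in> gpolys g a b"
  shows "p \<in> borel_measurable borel" "\<exists>B. \<forall>x. norm (p x) \<le> B"
proof -
  obtain S c where S: "finite S"
    "p = (\<lambda>x. \<Sum>(x0, n)\<in>S. c (x0, n) * of_real (gmono g a b x0 n x))"
    using assms unfolding gpolys_def by blast
  show "p \<in> borel_measurable borel"
    unfolding S(2) split_def by measurable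
  have "\<forall>s. \<exists>B. \<forall>x. \<bar>gmono g a b (fst s) (snd s) x\<bar> \<le> B"
    using gmono_borel_bounded by blast
  then obtain B where B: "\<And>s x. \<bar>gmono g a b (fst s) (snd s) x\<bar> \<le> B s"
    by metis
  have "norm (p x) \<le> (\<Sum>s\<in>S. norm (c s) * B s)" for x
    unfolding S(2) split_def
    by (rule order_trans[OF norm_sum sum_mono]) (auto simp: norm_mult intro!: mult_left_mono B)
  then show "\<exists>B. \<forall>x. norm (p x) \<le> B" by blast
qed

lemma gprim_gpoly:
  fixes p :: "real \<Rightarrow> 'f::{real_normed_field, banach, second_countable_topology}"
  assumes "p \<in> gpolys g a b"
  shows "\<exists>q\<in>gpolys g a b. \<forall>x\<in>{a..b}. q x = k + gprim p x"
proof -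
  let ?m = "\<lambda>s x. gmono g a b (fst s) (snd s) x"
  let ?m' = "\<lambda>s x. of_real (gmono g a b (fst s) (Suc (snd s)) x) :: 'f"
  obtain S c where S: "finite S" "S \<subseteq> {a..b} \<times> UNIV"
    "p = (\<lambda>x. \<Sum>(x0, n)\<in>S. c (x0, n) * of_real (gmono g a b x0 n x))"
    using assms unfolding gpolys_def by blast
  define c' where "c' s = c s / of_nat (Suc (snd s))" for s
  define q where "q x = (k - (\<Sum>s\<in>S. c' s * ?m' s a)) + (\<Sum>s\<in>S. c' s * ?m' s x)" for x
  have "q \<in> gpolys g a b"
    unfolding q_def using S a_less_b by (intro gpolys_add gpolys_const gpolys_sum gpolys_monomial) auto
  moreover have "q x = k + gprim p x" if "x \<in> {a..b}" for x
  proof -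
    have int: "integrable M (\<lambda>y. indicator {a..<x} y *\<^sub>R ?m s y)" for s
      using integrable_gmono by (intro integrable_mult_indicator) auto
    have "gprim p x = (\<integral>y. (\<Sum>s\<in>S. c s * of_real (indicator {a..<x} y *\<^sub>R ?m s y)) \<partial>M)"
      unfolding gprim_def S(3) split_def
      by (simp add: scaleR_sum_right indicator_def scaleR_conv_of_real mult.left_commute sum_distrib_left)
    also have "\<dots> = (\<Sum>s\<in>S. \<integral>y. c s * of_real (indicator {a..<x} y *\<^sub>R ?m s y) \<partial>M)"
      using int by (intro Bochner_Integration.integral_sum integrable_mult_right integrable_of_real)
    also have "\<dots> = (\<Sum>s\<in>S. c s * of_real (LINT y:{a..<x}|M. ?m s y))"
      unfolding set_lebesgue_integral_def using int by (simp del: of_real_mult)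
    also have "\<dots> = (\<Sum>s\<in>S. c' s * (?m' s x - ?m' s a))"
      using that by (simp add: set_integral_gmono c'_def field_simps del: of_nat_Suc)
    finally show ?thesis
      by (simp add: q_def right_diff_distrib sum_subtractf)
  qed
  ultimately show ?thesis by blast
qed

end

section \<open>Uniformly \<open>g\<close>-continuous functions\<close>

lemma UCg_const: "UCg g a b (\<lambda>x. c)"
  unfolding UCg_def by (auto intro!: exI[of _ 1])

lemma UCg_add:
  assumes "UCg g a b f" "UCg g a b h"
  shows "UCg g a b (\<lambda>x. f x + h x)"
  unfolding UCg_def
proof (intro allI impI)
  fix e :: real
  assume "e > 0"
  then have e2: "e / 2 > 0" by simp
  obtain d1 where "d1 > 0"
    and d1: "\<forall>x\<in>{a..b}. \<forall>y\<in>{a..b}. \<bar>g x - g y\<bar> < d1 \<longrightarrow> norm (f x - f y) < e / 2"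
    using assms(1)[unfolded UCg_def, rule_format, OF e2] by blast
  obtain d2 where "d2 > 0"
    and d2: "\<forall>x\<in>{a..b}. \<forall>y\<in>{a..b}. \<bar>g x - g y\<bar> < d2 \<longrightarrow> norm (h x - h y) < e / 2"
    using assms(2)[unfolded UCg_def, rule_format, OF e2] by blast
  show "\<exists>d>0. \<forall>x\<in>{a..b}. \<forall>y\<in>{a..b}. \<bar>g x - g y\<bar> < d \<longrightarrow> norm (f x + h x - (f y + h y)) < e"
  proof (intro exI[of _ "min d1 d2"] conjI ballI impI)
    fix x y
    assume xy: "x \<in> {a..b}" "y \<in> {a..b}" "\<bar>g x - g y\<bar> < min d1 d2"
    have "norm (f x + h x - (f y + h y)) \<le> norm (f x - f y) + norm (h x - h y)"
      using norm_triangle_ineq[of "f x - f y" "h x - h y"] by (simp add: algebra_simps)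
    also have "\<dots> < e / 2 + e / 2"
      using d1 d2 xy by (intro add_strict_mono) auto
    finally show "norm (f x + h x - (f y + h y)) < e" by simp
  qed (use \<open>d1 > 0\<close> \<open>d2 > 0\<close> in simp)
qed

lemma UCg_sum:
  assumes "finite I" "\<And>i. i \<in> I \<Longrightarrow> UCg g a b (f i)"
  shows "UCg g a b (\<lambda>x. \<Sum>i\<in>I. f i x)"
  using assms by (induction I rule: finite_induct) (auto intro: UCg_const UCg_add)

lemma UCg_comp_Lipschitz:
  fixes u :: "real \<Rightarrow> 'f::real_normed_field" and \<phi> :: "'f \<Rightarrow> 'h::real_normed_field"
  assumes "UCg g a b u" "\<And>s t. norm (\<phi> s - \<phi> t) \<le> L * norm (s - t)" "L \<ge> 0"
  shows "UCg g a b (\<lambda>x. \<phi> (u x))"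
  unfolding UCg_def
proof (intro allI impI)
  fix e :: real
  assume "e > 0"
  then have eL: "e / (L + 1) > 0" using assms(3) by simp
  obtain d where "d > 0"
    and d: "\<forall>x\<in>{a..b}. \<forall>y\<in>{a..b}. \<bar>g x - g y\<bar> < d \<longrightarrow> norm (u x - u y) < e / (L + 1)"
    using assms(1)[unfolded UCg_def, rule_format, OF eL] by blast
  show "\<exists>d>0. \<forall>x\<in>{a..b}. \<forall>y\<in>{a..b}. \<bar>g x - g y\<bar> < d \<longrightarrow> norm (\<phi> (u x) - \<phi> (u y)) < e"
  proof (intro exI[of _ d] conjI ballI impI)
    fix x y
    assume xy: "x \<in> {a..b}" "y \<in> {a..b}" "\<bar>g x - g y\<bar> < d"
    have "norm (\<phi> (u x) - \<phi> (u y)) \<le> L * norm (u x - u y)" by (rule assms(2))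
    also have "\<dots> \<le> L * (e / (L + 1))"
      using d[rule_format, OF xy] assms(3) by (intro mult_left_mono) auto
    also have "\<dots> < e"
      using \<open>e > 0\<close> assms(3) by (simp add: field_simps)
    finally show "norm (\<phi> (u x) - \<phi> (u y)) < e" .
  qed (fact \<open>d > 0\<close>)
qed

lemma UCg_mult_of_real:
  fixes c :: "'f::real_normed_field"
  assumes "UCg g a b (u :: real \<Rightarrow> real)"
  shows "UCg g a b (\<lambda>x. c * of_real (u x))"
  by (rule UCg_comp_Lipschitz[OF assms, where L="norm c"])
    (auto simp: norm_mult right_diff_distrib[symmetric] of_real_diff[symmetric] simp del: of_real_diff)

lemma bounded_uniformly_continuous_image_complete:
  fixes f :: "'a::heine_borel \<Rightarrow> 'b::complete_space"
  assumes "uniformly_continuous_on S f" "bounded S"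
  shows "bounded (f ` S)"
proof -
  obtain h where "uniformly_continuous_on (closure S) h" and f_eq: "\<And>x. x \<in> S \<Longrightarrow> f x = h x"
    using uniformly_continuous_on_extension_on_closure[OF assms(1)] by metis
  then have "compact (h ` closure S)"
    using assms(2) compact_closure compact_continuous_image uniformly_continuous_imp_continuous
    by blast
  moreover have "f ` S \<subseteq> h ` closure S"
    using f_eq closure_subset by fastforce
  ultimately show ?thesis
    using compact_imp_bounded bounded_subset by blast
qed

context derivator_interval
begin

lemma UCg_gext: "UCg g a b (gext g a b)"
  unfolding UCg_def by (auto simp: gext_eq intro!: exI)

lemma UCg_eq_if_g_eq:
  assumes "UCg g a b f" "x \<in> {a..b}" "y \<in> {a..b}" "g x = g y"
  shows "f x = f y"
proof -
  have "norm (f x - f y) < e" if "e > 0" for e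
    using assms that unfolding UCg_def by fastforce
  from this[of "norm (f x - f y)"] show ?thesis by auto
qed

text \<open>A uniformly \<open>g\<close>-continuous \<open>f\<close> factors through \<open>g\<close> as a uniformly continuous
  function on the bounded set \<open>g ` {a..b}\<close>.\<close>

lemma UCg_bounded:
  fixes f :: "real \<Rightarrow> 'f::{real_normed_field, banach}"
  assumes f: "UCg g a b f"
  obtains B where "\<And>x. x \<in> {a..b} \<Longrightarrow> norm (f x) \<le> B"
proof -
  define \<phi> where "\<phi> y = f (inv_into {a..b} g y)" for y
  have \<phi>_g: "\<phi> (g x) = f x" if "x \<in> {a..b}" for x
    using UCg_eq_if_g_eq[OF f, of "inv_into {a..b} g (g x)" x] that inv_into_into[of "g x" g "{a..b}"]
    by (simp add: \<phi>_def f_inv_into_f)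
  have "uniformly_continuous_on (g ` {a..b}) \<phi>"
    unfolding uniformly_continuous_on_def
  proof (intro allI impI)
    fix e :: real
    assume "e > 0"
    then obtain d where "d > 0"
      and "\<forall>x\<in>{a..b}. \<forall>y\<in>{a..b}. \<bar>g x - g y\<bar> < d \<longrightarrow> norm (f x - f y) < e"
      using f[unfolded UCg_def, rule_format] by blast
    then show "\<exists>d>0. \<forall>y\<in>g ` {a..b}. \<forall>y'\<in>g ` {a..b}. dist y' y < d \<longrightarrow> dist (\<phi> y') (\<phi> y) < e"
      by (auto simp: \<phi>_g dist_real_def dist_norm)
  qed
  moreover have "bounded (g ` {a..b})"
    by (rule bounded_subset[OF bounded_closed_interval[of "g a" "g b"]]) (auto intro: g_mono)
  ultimately have "bounded (\<phi> ` g ` {a..b})"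
    by (rule bounded_uniformly_continuous_image_complete)
  then obtain B where "\<And>y. y \<in> \<phi> ` g ` {a..b} \<Longrightarrow> norm y \<le> B"
    unfolding bounded_iff by blast
  then show ?thesis
    using that \<phi>_g by (metis image_eqI)
qed

section \<open>Uniform approximation by \<open>g\<close>-primitives\<close>

text \<open>The points \<open>gstep \<eta> 0 \<le> gstep \<eta> 1 \<le> \<dots>\<close> reach \<open>b\<close> and cut \<open>[a, b]\<close> into pieces
  \<open>(t, u]\<close> on which \<open>g u - g x < \<eta>\<close>; across such a piece \<open>g\<close> can rise by more than \<open>\<eta>\<close>
  only through a jump at \<open>t\<close>.\<close>

definition gstep :: "real \<Rightarrow> nat \<Rightarrow> real" where
  "gstep \<eta> k = Sup {x \<in> {a..b}. g x \<le> g a + real k * \<eta>}"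

lemma gstep_set:
  assumes "0 \<le> \<eta>"
  shows "a \<in> {x \<in> {a..b}. g x \<le> g a + real k * \<eta>}"
    "bdd_above {x \<in> {a..b}. g x \<le> g a + real k * \<eta>}"
  using a_less_b assms by auto

lemma gstep_bounds:
  assumes "0 \<le> \<eta>"
  shows "a \<le> gstep \<eta> k" "gstep \<eta> k \<le> b"
proof -
  show "a \<le> gstep \<eta> k"
    unfolding gstep_def by (rule cSup_upper[OF gstep_set[OF assms]])
  show "gstep \<eta> k \<le> b"
    unfolding gstep_def using gstep_set(1)[OF assms, of k] by (intro cSup_least) auto
qed

lemma g_less_beyond_gstep:
  assumes "0 \<le> \<eta>" "x \<in> {a..b}" "gstep \<eta> k < x"
  shows "g a + real k * \<eta> < g x"
proof (rule ccontr)
  assume "\<not> ?thesis"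
  then have "x \<le> gstep \<eta> k"
    unfolding gstep_def using assms(2) by (intro cSup_upper gstep_set[OF assms(1)]) auto
  then show False
    using assms(3) by simp
qed

lemma g_below_gstep:
  assumes "0 \<le> \<eta>" "x \<in> {a..b}" "x < gstep \<eta> k"
  shows "g x \<le> g a + real k * \<eta>"
proof -
  obtain y where y: "y \<in> {x \<in> {a..b}. g x \<le> g a + real k * \<eta>}" "x < y"
    using assms(3) less_cSup_iff[OF _ gstep_set(2)[OF assms(1)]] gstep_set(1)[OF assms(1)]
    unfolding gstep_def by blast
  then have "g x \<le> g y"
    using assms(2) by (intro g_mono) auto
  then show ?thesis
    using y by auto
qed

lemma g_gstep:
  assumes "0 \<le> \<eta>"
  shows "g (gstep \<eta> k) \<le> g a + real k * \<eta>"
proof (cases "gstep \<eta> k = a")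
  case False
  then have s: "a < gstep \<eta> k" "gstep \<eta> k \<le> b"
    using gstep_bounds[OF assms, of k] by auto
  have "(g \<longlongrightarrow> g (gstep \<eta> k)) (at_left (gstep \<eta> k))"
    using derivator s unfolding derivator_def continuous_within by auto
  moreover have "\<forall>\<^sub>F x in at_left (gstep \<eta> k). g x \<le> g a + real k * \<eta>"
    unfolding eventually_at_left_field using s
    by (intro exI[of _ a]) (auto intro!: g_below_gstep[OF assms])
  ultimately show ?thesis
    by (rule tendsto_upperbound) simp
qed (use assms in simp)

lemma gstep_mono_Suc:
  assumes "0 \<le> \<eta>"
  shows "gstep \<eta> k \<le> gstep \<eta> (Suc k)"
  unfolding gstep_def
proof (rule cSup_subset_mono)
  show "{x \<in> {a..b}. g x \<le> g a + real k * \<eta>} \<subseteq> {x \<in> {a..b}. g x \<le> g a + real (Suc k) * \<eta>}"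
    using assms by (auto simp: distrib_right)
  show "{x \<in> {a..b}. g x \<le> g a + real k * \<eta>} \<noteq> {}"
    using gstep_set(1)[OF assms] by blast
qed (fact gstep_set(2)[OF assms])

lemma gstep_eventually_end:
  assumes "0 < \<eta>"
  obtains K where "gstep \<eta> K = b"
proof -
  obtain K :: nat where "(g b - g a) / \<eta> < K"
    using reals_Archimedean2 by blast
  then have "b \<in> {x \<in> {a..b}. g x \<le> g a + real K * \<eta>}"
    using assms a_less_b by (simp add: field_simps)
  then have "b \<le> gstep \<eta> K"
    unfolding gstep_def using gstep_set(2) assms by (intro cSup_upper) auto
  then show ?thesis
    using that gstep_bounds[of \<eta> K] assms by force
qed

lemma g_gstep_Suc_diff:
  assumes "0 \<le> \<eta>" "gstep \<eta> k < x" "x \<le> gstep \<eta> (Suc k)"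
  shows "g (gstep \<eta> (Suc k)) - g x < \<eta>"
proof -
  have "x \<in> {a..b}"
    using gstep_bounds[OF assms(1)] assms(2,3) by (meson atLeastAtMost_iff less_imp_le order_trans)
  then show ?thesis
    using g_less_beyond_gstep[OF assms(1) _ assms(2)] g_gstep[OF assms(1), of "Suc k"]
    by (simp add: distrib_right)
qed

lemma gprim_eq_beyond:
  assumes "\<And>y. t \<le> y \<Longrightarrow> h y = 0" "t \<le> x"
  shows "gprim h x = gprim h t"
  unfolding gprim_def
  using assms by (intro Bochner_Integration.integral_cong refl) (auto simp: indicator_def)

lemma gprim_add_indicator:
  fixes h :: "real \<Rightarrow> 'f::{banach, second_countable_topology}"
  assumes [measurable]: "h \<in> borel_measurable borel" and "\<And>y. norm (h y) \<le> B"
  shows "gprim (\<lambda>y. h y + indicator {t..<u} y *\<^sub>R C) x =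
    gprim h x + measure M ({a..<x} \<inter> {t..<u}) *\<^sub>R C"
proof -
  have "integrable M (\<lambda>y. indicator {a..<x} y *\<^sub>R h y)"
    using integrable_bounded[OF assms] by (intro integrable_mult_indicator) auto
  moreover have "integrable M (indicator ({a..<x} \<inter> {t..<u}) :: real \<Rightarrow> real)"
    by (intro integrable_bounded[where B=1]) (auto simp: indicator_def)
  moreover have "indicator {a..<x} y *\<^sub>R (h y + indicator {t..<u} y *\<^sub>R C) =
      indicator {a..<x} y *\<^sub>R h y + indicator ({a..<x} \<inter> {t..<u}) y *\<^sub>R C" for y
    by (auto simp: indicator_def)
  ultimately show ?thesis
    unfolding gprim_def by simp
qed

lemma gprim_add_slope:
  fixes h :: "real \<Rightarrow> 'f::{banach, second_countable_topology}"
  assumes "h \<in> borel_measurable borel" "\<And>y. norm (h y) \<le> B" "\<And>y. t \<le> y \<Longrightarrow> h y = 0"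
    and "a \<le> t" "t \<le> x" "x \<le> u" "u \<le> b"
  shows "gprim (\<lambda>y. h y + indicator {t..<u} y *\<^sub>R C) x = gprim h t + (g x - g t) *\<^sub>R C"
proof -
  have "{a..<x} \<inter> {t..<u} = {t..<x}"
    using assms by auto
  then show ?thesis
    using assms gprim_eq_beyond[OF assms(3) \<open>t \<le> x\<close>]
    by (simp add: gprim_add_indicator[OF assms(1,2)] measure_Ico)
qed

lemma gprim_diff:
  fixes h p :: "real \<Rightarrow> 'f::{banach, second_countable_topology}"
  assumes "h \<in> borel_measurable borel" "\<And>y. norm (h y) \<le> Bh"
    and "p \<in> borel_measurable borel" "\<And>y. norm (p y) \<le> Bp"
  shows "gprim (\<lambda>y. h y - p y) x = gprim h x - gprim p x"
  unfolding gprim_def scaleR_diff_right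
  using integrable_bounded[OF assms(1,2)] integrable_bounded[OF assms(3,4)]
  by (intro Bochner_Integration.integral_diff integrable_mult_indicator) auto

definition approx_by_gprim ::
    "(real \<Rightarrow> 'f::{banach, second_countable_topology}) \<Rightarrow> real \<Rightarrow> real \<Rightarrow> (real \<Rightarrow> 'f) \<Rightarrow> bool" where
  "approx_by_gprim f \<epsilon> t h \<longleftrightarrow> h \<in> borel_measurable borel \<and> (\<exists>B. \<forall>y. norm (h y) \<le> B) \<and>
    (\<forall>y\<ge>t. h y = 0) \<and> f t - f a = gprim h t \<and> (\<forall>x\<in>{a..t}. norm (f x - f a - gprim h x) \<le> \<epsilon>)"

text \<open>Where \<open>g\<close> rises by at least \<open>\<delta>\<close> across \<open>[t, u]\<close>, the weight of the possibly distant
  value \<open>f t\<close> in the interpolation is at most \<open>\<eta> / \<delta>\<close>, which makes up for \<open>f x - f t\<close>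
  being merely bounded.\<close>

lemma interpolation_error_le:
  fixes f :: "real \<Rightarrow> 'f::real_normed_field"
  assumes modulus: "\<And>x y. x \<in> {a..b} \<Longrightarrow> y \<in> {a..b} \<Longrightarrow> \<bar>g x - g y\<bar> < \<delta> \<Longrightarrow> norm (f x - f y) < \<epsilon> / 2"
    and bound: "\<And>x. x \<in> {a..b} \<Longrightarrow> norm (f x) \<le> B"
    and "a \<le> t" "t < x" "x \<le> u" "u \<le> b"
    and "g u - g x < \<eta>" "\<eta> \<le> \<delta>" "4 * B * \<eta> \<le> \<epsilon> * \<delta>"
  shows "norm (f x - f t - of_real ((g x - g t) / (g u - g t)) * (f u - f t)) \<le> \<epsilon>"
proof -
  define l where "l = (g x - g t) / (g u - g t)"
  have g_tx: "g t \<le> g x" and g_xu: "g x \<le> g u"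
    using assms by (auto intro: g_mono)
  then have l: "0 \<le> l" "l \<le> 1"
    unfolding l_def by (auto intro: divide_le_eq_1_pos[THEN iffD2] simp: divide_le_eq_1)
  have in_ab: "t \<in> {a..b}" "x \<in> {a..b}" "u \<in> {a..b}"
    using assms by auto
  have near_u: "norm (f x - f u) \<le> \<epsilon> / 2"
    using modulus[OF in_ab(2,3)] g_xu assms(7,8) by force
  have near_t: "(1 - l) * norm (f x - f t) \<le> \<epsilon> / 2"
  proof (cases "g u - g t < \<delta>")
    case True
    then have "norm (f x - f t) \<le> \<epsilon> / 2"
      using modulus[OF in_ab(2,1)] g_tx g_xu by force
    moreover have "(1 - l) * norm (f x - f t) \<le> 1 * norm (f x - f t)"
      using l by (intro mult_right_mono) auto
    ultimately show ?thesis by simp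
  next
    case False
    then have "0 < \<delta>" "0 < g u - g t"
      using assms(7,8) g_tx g_xu by linarith+
    have "1 - l = (g u - g x) / (g u - g t)"
      using \<open>0 < g u - g t\<close> by (simp add: l_def field_simps)
    also have "\<dots> \<le> \<eta> / \<delta>"
      using False assms(7) g_xu \<open>0 < \<delta>\<close> by (intro frac_le) auto
    finally have "1 - l \<le> \<eta> / \<delta>" .
    moreover have "norm (f x - f t) \<le> 2 * B"
      using bound[OF in_ab(1)] bound[OF in_ab(2)] norm_triangle_ineq4[of "f x" "f t"] by linarith
    ultimately have "(1 - l) * norm (f x - f t) \<le> \<eta> / \<delta> * (2 * B)"
      using l by (intro mult_mono) auto
    also have "\<dots> \<le> \<epsilon> / 2"
      using assms(9) \<open>0 < \<delta>\<close> by (simp add: field_simps)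
    finally show ?thesis .
  qed
  have "f x - f t - of_real l * (f u - f t) = of_real (1 - l) * (f x - f t) + of_real l * (f x - f u)"
    by (simp add: algebra_simps)
  also have "norm \<dots> \<le> (1 - l) * norm (f x - f t) + l * norm (f x - f u)"
    using norm_triangle_ineq[of "of_real (1 - l) * (f x - f t)" "of_real l * (f x - f u)"] l
    by (simp add: norm_mult del: of_real_diff)
  also have "\<dots> \<le> \<epsilon> / 2 + 1 * (\<epsilon> / 2)"
    using near_t near_u l by (intro add_mono mult_mono) auto
  finally show ?thesis
    by (simp add: l_def)
qed

lemma approx_by_gprim_extend:
  fixes f :: "real \<Rightarrow> 'f::{real_normed_field, banach, second_countable_topology}"
  assumes f: "UCg g a b f"
    and modulus: "\<And>x y. x \<in> {a..b} \<Longrightarrow> y \<in> {a..b} \<Longrightarrow> \<bar>g x - g y\<bar> < \<delta> \<Longrightarrow> norm (f x - f y) < \<epsilon> / 2"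
    and bound: "\<And>x. x \<in> {a..b} \<Longrightarrow> norm (f x) \<le> B"
    and "\<eta> \<le> \<delta>" "4 * B * \<eta> \<le> \<epsilon> * \<delta>"
    and h: "approx_by_gprim f \<epsilon> t h"
    and tu: "a \<le> t" "t \<le> u" "u \<le> b"
    and close: "\<And>x. t < x \<Longrightarrow> x \<le> u \<Longrightarrow> g u - g x < \<eta>"
  shows "\<exists>h'. approx_by_gprim f \<epsilon> u h'"
proof -
  obtain Bh where [measurable]: "h \<in> borel_measurable borel" and Bh: "\<And>y. norm (h y) \<le> Bh"
    and h_zero: "\<And>y. t \<le> y \<Longrightarrow> h y = 0" and h_t: "f t - f a = gprim h t"
    and h_approx: "\<And>x. x \<in> {a..t} \<Longrightarrow> norm (f x - f a - gprim h x) \<le> \<epsilon>"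
    using h unfolding approx_by_gprim_def by blast
  txt \<open>Adding the slope \<open>C\<close> on \<open>[t, u)\<close> makes the primitive interpolate \<open>f\<close> linearly in \<open>g\<close>.
    Where \<open>g\<close> is flat on \<open>[t, u]\<close>, division by zero gives \<open>C = 0\<close>, which is right because then
    \<open>f u = f t\<close>.\<close>
  define C where "C = (f u - f t) / of_real (g u - g t)"
  define h' where "h' y = h y + indicator {t..<u} y *\<^sub>R C" for y
  have left: "gprim h' x = gprim h x" if "x \<le> t" for x
    using that unfolding h'_def[abs_def] by (simp add: gprim_add_indicator[OF _ Bh])
  have interpolate: "f x - f a - gprim h' x = f x - f t - of_real ((g x - g t) / (g u - g t)) * (f u - f t)"
    if "t \<le> x" "x \<le> u" for x
  proof -
    have "gprim h' x = gprim h t + (g x - g t) *\<^sub>R C"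
      unfolding h'_def[abs_def] using that tu by (intro gprim_add_slope[OF _ Bh h_zero]) auto
    then show ?thesis
      using h_t by (simp add: C_def scaleR_conv_of_real of_real_divide algebra_simps)
  qed
  have "approx_by_gprim f \<epsilon> u h'"
    unfolding approx_by_gprim_def
  proof (intro conjI allI impI ballI)
    show "h' \<in> borel_measurable borel"
      unfolding h'_def by measurable
    have "norm (h' y) \<le> Bh + norm C" for y
      unfolding h'_def using Bh[of y] norm_triangle_ineq[of "h y" "indicator {t..<u} y *\<^sub>R C"]
      by (auto simp: indicator_def intro: add_increasing2)
    then show "\<exists>B. \<forall>y. norm (h' y) \<le> B" by blast
    show "h' y = 0" if "u \<le> y" for y
      using that tu h_zero by (simp add: h'_def)
    show "f u - f a = gprim h' u"
    proof (cases "g u = g t")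
      case True
      then have "f u = f t"
        using tu by (intro UCg_eq_if_g_eq[OF f]) auto
      then show ?thesis
        using interpolate[of u] tu by simp
    next
      case False
      then show ?thesis
        using interpolate[of u] tu by simp
    qed
    show "norm (f x - f a - gprim h' x) \<le> \<epsilon>" if "x \<in> {a..u}" for x
    proof (cases "x \<le> t")
      case True
      then show ?thesis
        using that h_approx left by simp
    next
      case False
      have "norm (f x - f t - of_real ((g x - g t) / (g u - g t)) * (f u - f t)) \<le> \<epsilon>"
        by (rule interpolation_error_le[OF modulus bound]) (use that False tu close assms(4,5) in auto)
      moreover have "f x - f a - gprim h' x = f x - f t - of_real ((g x - g t) / (g u - g t)) * (f u - f t)"
        using False that by (intro interpolate) auto
      ultimately show ?thesis
        by (simp only:)
    qed
  qed
  then show ?thesis by blast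
qed

lemma approx_by_gprim_gstep_0:
  fixes f :: "real \<Rightarrow> 'f::{real_normed_field, banach, second_countable_topology}"
  assumes f: "UCg g a b f" and "0 \<le> \<eta>" "0 \<le> \<epsilon>"
  shows "approx_by_gprim f \<epsilon> (gstep \<eta> 0) (\<lambda>_. 0)"
proof -
  have flat: "f x = f a" if "x \<in> {a..gstep \<eta> 0}" for x
  proof (rule UCg_eq_if_g_eq[OF f])
    show x: "x \<in> {a..b}" "a \<in> {a..b}"
      using that gstep_bounds[of \<eta> 0] assms(2) a_less_b by auto
    have "g a \<le> g x" "g x \<le> g (gstep \<eta> 0)"
      using that x gstep_bounds[of \<eta> 0] assms(2) by (auto intro: g_mono)
    then show "g x = g a"
      using g_gstep[of \<eta> 0] assms(2) by simp
  qed
  have zero: "gprim (\<lambda>_. 0 :: 'f) x = 0" for x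
    by (simp add: gprim_def)
  show ?thesis
    unfolding approx_by_gprim_def
  proof (intro conjI ballI allI impI exI[of _ 0])
    show "f (gstep \<eta> 0) - f a = gprim (\<lambda>_. 0) (gstep \<eta> 0)"
      using flat[of "gstep \<eta> 0"] gstep_bounds[of \<eta> 0] assms(2) zero by simp
    show "norm (f x - f a - gprim (\<lambda>_. 0) x) \<le> \<epsilon>" if "x \<in> {a..gstep \<eta> 0}" for x
      using flat[OF that] zero assms(3) by simp
  qed auto
qed

lemma UCg_gprim_approx:
  fixes f :: "real \<Rightarrow> 'f::{real_normed_field, banach, second_countable_topology}"
  assumes f: "UCg g a b f" and "\<epsilon> > 0"
  obtains h B where "h \<in> borel_measurable borel" "\<And>y. norm (h y) \<le> B"
    "\<And>x. x \<in> {a..b} \<Longrightarrow> norm (f x - f a - gprim h x) \<le> \<epsilon>"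
proof -
  obtain Bf where Bf: "\<And>x. x \<in> {a..b} \<Longrightarrow> norm (f x) \<le> Bf"
    using UCg_bounded[OF f] by blast
  have "a \<in> {a..b}"
    using a_less_b by simp
  then have "0 \<le> Bf"
    using Bf order_trans[OF norm_ge_zero] by blast
  obtain \<delta> where "\<delta> > 0"
    and modulus: "\<And>x y. x \<in> {a..b} \<Longrightarrow> y \<in> {a..b} \<Longrightarrow> \<bar>g x - g y\<bar> < \<delta> \<Longrightarrow> norm (f x - f y) < \<epsilon> / 2"
    using f[unfolded UCg_def, rule_format, of "\<epsilon> / 2"] \<open>\<epsilon> > 0\<close> by force
  define \<eta> where "\<eta> = min \<delta> (\<epsilon> * \<delta> / (4 * Bf + 1))"
  have \<eta>: "0 < \<eta>" "\<eta> \<le> \<delta>" "4 * Bf * \<eta> \<le> \<epsilon> * \<delta>"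
  proof -
    show "0 < \<eta>" "\<eta> \<le> \<delta>"
      using \<open>\<delta> > 0\<close> \<open>\<epsilon> > 0\<close> \<open>0 \<le> Bf\<close> by (auto simp: \<eta>_def)
    have "4 * Bf * \<eta> \<le> (4 * Bf + 1) * (\<epsilon> * \<delta> / (4 * Bf + 1))"
      using \<open>0 < \<eta>\<close> \<open>0 \<le> Bf\<close> by (intro mult_mono) (auto simp: \<eta>_def)
    then show "4 * Bf * \<eta> \<le> \<epsilon> * \<delta>"
      using \<open>0 \<le> Bf\<close> by simp
  qed
  have "\<exists>h. approx_by_gprim f \<epsilon> (gstep \<eta> k) h" for k
  proof (induction k)
    case 0
    have "approx_by_gprim f \<epsilon> (gstep \<eta> 0) (\<lambda>_. 0)"
      using \<eta>(1) \<open>\<epsilon> > 0\<close> by (intro approx_by_gprim_gstep_0[OF f]) auto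
    then show ?case by blast
  next
    case (Suc k)
    then obtain h where "approx_by_gprim f \<epsilon> (gstep \<eta> k) h"
      by blast
    moreover have "a \<le> gstep \<eta> k" "gstep \<eta> k \<le> gstep \<eta> (Suc k)" "gstep \<eta> (Suc k) \<le> b"
      using gstep_bounds[of \<eta>] gstep_mono_Suc[of \<eta> k] \<eta>(1) by auto
    ultimately show ?case
      using approx_by_gprim_extend[OF f modulus Bf \<eta>(2,3)] g_gstep_Suc_diff[of \<eta> k] \<eta>(1)
      by auto
  qed
  moreover obtain K where "gstep \<eta> K = b"
    using gstep_eventually_end[OF \<eta>(1)] .
  ultimately obtain h where "approx_by_gprim f \<epsilon> b h"
    by metis
  then show ?thesis
    using that unfolding approx_by_gprim_def by blast
qed

section \<open>Density in \<open>L\<^sup>2\<^sub>g\<close> implies uniform density\<close>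

lemma in_L2g_bounded:
  fixes h :: "real \<Rightarrow> 'f::{real_normed_field, second_countable_topology}"
  assumes "h \<in> borel_measurable borel" "\<And>y. norm (h y) \<le> B"
  shows "in_L2g g a b h"
proof -
  have "(\<integral>\<^sup>+ x \<in> {a..<b}. ennreal ((norm (h x))\<^sup>2) \<partial>M) \<le> (\<integral>\<^sup>+ x. ennreal (B\<^sup>2) \<partial>M)"
  proof (intro nn_integral_mono)
    fix x
    have "(norm (h x))\<^sup>2 \<le> B\<^sup>2"
      using assms(2)[of x] by (intro power_mono) auto
    then show "ennreal ((norm (h x))\<^sup>2) * indicator {a..<b} x \<le> ennreal (B\<^sup>2)"
      by (auto simp: indicator_def)
  qed
  also have "\<dots> < \<infinity>"
    using emeasure_finite[of UNIV] by (simp add: ennreal_mult_eq_top_iff less_top[symmetric])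
  finally show ?thesis
    unfolding in_L2g_def using assms(1) by (auto intro: measurable_completion)
qed

text \<open>AM-GM in the form \<open>\<bar>v\<bar> \<le> \<eta> / 2 + \<bar>v\<bar>\<^sup>2 / (2 * \<eta>)\<close> bounds the \<open>g\<close>-primitive
  uniformly by the \<open>L\<^sup>2\<close> norm.\<close>

lemma norm_gprim_le_L2:
  fixes v :: "real \<Rightarrow> 'f::{banach, second_countable_topology}"
  assumes [measurable]: "v \<in> borel_measurable borel" and "\<And>y. norm (v y) \<le> B"
    and "\<eta> > 0" "x \<le> b"
    and L2: "(\<integral>\<^sup>+ y \<in> {a..<b}. ennreal ((norm (v y))\<^sup>2) \<partial>M) < ennreal e"
  shows "norm (gprim v x) \<le> \<eta> / 2 * measure M UNIV + e / (2 * \<eta>)"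
proof -
  have "0 \<le> B"
    using assms(2)[of 0] norm_ge_zero order_trans by blast
  have int_L1: "integrable M (\<lambda>y. indicator {a..<b} y * norm (v y))"
    using assms(2) \<open>0 \<le> B\<close> by (intro integrable_bounded[where B=B]) (auto simp: indicator_def)
  have int_L2: "integrable M (\<lambda>y. indicator {a..<b} y * (norm (v y))\<^sup>2)"
    using assms(2) \<open>0 \<le> B\<close>
    by (intro integrable_bounded[where B="B\<^sup>2"])
      (auto simp: indicator_def abs_le_square_iff intro!: power_mono)
  have "ennreal (\<integral>y. indicator {a..<b} y * (norm (v y))\<^sup>2 \<partial>M) =
      (\<integral>\<^sup>+ y. indicator {a..<b} y * (norm (v y))\<^sup>2 \<partial>M)"
    by (rule nn_integral_eq_integral[OF int_L2, symmetric]) auto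
  also have "\<dots> = (\<integral>\<^sup>+ y \<in> {a..<b}. ennreal ((norm (v y))\<^sup>2) \<partial>M)"
    by (intro nn_integral_cong) (auto simp: indicator_def)
  also have "\<dots> < ennreal e"
    by (rule L2)
  finally have L2_real: "(\<integral>y. indicator {a..<b} y * (norm (v y))\<^sup>2 \<partial>M) < e"
    by (simp add: ennreal_less_iff)
  have "norm (gprim v x) \<le> (\<integral>y. norm (indicator {a..<x} y *\<^sub>R v y) \<partial>M)"
    unfolding gprim_def by (rule integral_norm_bound)
  also have "\<dots> \<le> (\<integral>y. indicator {a..<b} y * norm (v y) \<partial>M)"
    using assms(2) \<open>0 \<le> B\<close> \<open>x \<le> b\<close> int_L1
    by (intro integral_mono integrable_bounded[where B=B]) (auto simp: indicator_def)
  also have "\<dots> \<le> (\<integral>y. \<eta> / 2 + indicator {a..<b} y * (norm (v y))\<^sup>2 / (2 * \<eta>) \<partial>M)"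
  proof (rule integral_mono)
    show "indicator {a..<b} y * norm (v y) \<le> \<eta> / 2 + indicator {a..<b} y * (norm (v y))\<^sup>2 / (2 * \<eta>)"
      for y
    proof -
      have "0 \<le> (norm (v y) - \<eta>)\<^sup>2" by simp
      then have "norm (v y) \<le> \<eta> / 2 + (norm (v y))\<^sup>2 / (2 * \<eta>)"
        using \<open>\<eta> > 0\<close> by (simp add: field_simps power2_eq_square algebra_simps)
      then show ?thesis
        using \<open>\<eta> > 0\<close> by (auto simp: indicator_def)
    qed
  qed (use int_L1 int_L2 in auto)
  also have "\<dots> = \<eta> / 2 * measure M UNIV + (\<integral>y. indicator {a..<b} y * (norm (v y))\<^sup>2 \<partial>M) / (2 * \<eta>)"
    using int_L2 by simp
  also have "\<dots> \<le> \<eta> / 2 * measure M UNIV + e / (2 * \<eta>)"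
    using L2_real \<open>\<eta> > 0\<close> by (simp add: divide_right_mono)
  finally show ?thesis .
qed

lemma L2_dense_imp_UC_dense:
  fixes P :: "(real \<Rightarrow> 'f::{real_normed_field, banach, second_countable_topology}) set"
  defines "P \<equiv> gpolys g a b"
  assumes "dense_L2g g a b P"
  shows "dense_UCg g a b P"
  unfolding dense_UCg_def
proof (intro allI impI)
  fix f :: "real \<Rightarrow> 'f" and e :: real
  assume f: "UCg g a b f" and "e > 0"
  define \<epsilon> where "\<epsilon> = e / 4"
  have "\<epsilon> > 0"
    using \<open>e > 0\<close> by (simp add: \<epsilon>_def)
  obtain h Bh where [measurable]: "h \<in> borel_measurable borel" and Bh: "\<And>y. norm (h y) \<le> Bh"
    and h: "\<And>x. x \<in> {a..b} \<Longrightarrow> norm (f x - f a - gprim h x) \<le> \<epsilon>"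
    using UCg_gprim_approx[OF f \<open>\<epsilon> > 0\<close>] by blast
  define m where "m = measure M UNIV"
  define \<eta> where "\<eta> = \<epsilon> / (m + 1)"
  have "m \<ge> 0"
    by (simp add: m_def)
  then have "\<eta> > 0" "\<eta> / 2 * m \<le> \<epsilon> / 2"
    using \<open>\<epsilon> > 0\<close> by (auto simp: \<eta>_def field_simps)
  obtain p where p: "p \<in> gpolys g a b"
    and p_L2: "(\<integral>\<^sup>+ x \<in> {a..<b}. ennreal ((norm (h x - p x))\<^sup>2) \<partial>M) < ennreal (\<eta> * \<epsilon>)"
    using assms(2) in_L2g_bounded[OF _ Bh] \<open>\<eta> > 0\<close> \<open>\<epsilon> > 0\<close>
    unfolding dense_L2g_def P_def by (meson mult_pos_pos \<open>h \<in> borel_measurable borel\<close>)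
  obtain Bp where [measurable]: "p \<in> borel_measurable borel" and Bp: "\<And>y. norm (p y) \<le> Bp"
    using gpoly_borel_bounded[OF p] by blast
  obtain q where q: "q \<in> gpolys g a b" and q_eq: "\<And>x. x \<in> {a..b} \<Longrightarrow> q x = f a + gprim p x"
    using gprim_gpoly[OF p, of "f a"] by blast
  have "norm (f x - q x) \<le> 2 * \<epsilon>" if x: "x \<in> {a..b}" for x
  proof -
    have "norm (h y - p y) \<le> Bh + Bp" for y
      using Bh[of y] Bp[of y] norm_triangle_ineq4[of "h y" "p y"] by linarith
    then have "norm (gprim (\<lambda>y. h y - p y) x) \<le> \<eta> / 2 * m + \<eta> * \<epsilon> / (2 * \<eta>)"
      unfolding m_def using x p_L2 \<open>\<eta> > 0\<close> by (intro norm_gprim_le_L2) auto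
    also have "\<dots> \<le> \<epsilon>"
      using \<open>\<eta> / 2 * m \<le> \<epsilon> / 2\<close> \<open>\<eta> > 0\<close> by simp
    finally have hp: "norm (gprim (\<lambda>y. h y - p y) x) \<le> \<epsilon>" .
    have "gprim (\<lambda>y. h y - p y) x = gprim h x - gprim p x"
      by (rule gprim_diff[OF _ Bh _ Bp]) simp_all
    then have "f x - q x = (f x - f a - gprim h x) + gprim (\<lambda>y. h y - p y) x"
      using q_eq[OF x] by simp
    then have "norm (f x - q x) \<le> norm (f x - f a - gprim h x) + norm (gprim (\<lambda>y. h y - p y) x)"
      by (simp only: norm_triangle_ineq)
    then show ?thesis
      using h[OF x] hp by linarith
  qed
  then have "(SUP x\<in>{a..b}. ereal (norm (f x - q x))) \<le> ereal (2 * \<epsilon>)"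
    by (intro SUP_least) simp
  also have "\<dots> < ereal e"
    using \<open>e > 0\<close> by (simp add: \<epsilon>_def)
  finally show "\<exists>p\<in>P. (SUP x\<in>{a..b}. ereal (norm (f x - p x))) < ereal e"
    using q unfolding P_def by blast
qed

end

section \<open>Uniform density implies density in \<open>L\<^sup>2\<^sub>g\<close>\<close>

lemma upper_set_eq_UN_Ico:
  fixes E :: "real set"
  assumes "E \<noteq> {}" "bdd_below E" "Inf E \<notin> E"
    and E_sub: "\<And>x. x \<in> E \<Longrightarrow> x < c"
    and up: "\<And>x y. x \<in> E \<Longrightarrow> x \<le> y \<Longrightarrow> y < c \<Longrightarrow> y \<in> E"
  shows "E = (\<Union>n. {Inf E + 1 / Suc n..<c})"
proof (intro equalityI subsetI)
  fix x
  assume x: "x \<in> E"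
  then have "Inf E < x"
    using cInf_lower[OF x assms(2)] assms(3) by (metis order.not_eq_order_implies_strict)
  then obtain n :: nat where "inverse (real (Suc n)) < x - Inf E"
    using reals_Archimedean by (metis diff_gt_0_iff_gt)
  then show "x \<in> (\<Union>n. {Inf E + 1 / Suc n..<c})"
    using E_sub[OF x] by (auto simp: inverse_eq_divide intro!: exI[of _ n])
next
  fix y
  assume "y \<in> (\<Union>n. {Inf E + 1 / Suc n..<c})"
  then obtain n :: nat where y: "Inf E + 1 / Suc n \<le> y" "y < c"
    by auto
  have "0 < 1 / real (Suc n)" by simp
  then have "Inf E < y"
    using y by linarith
  then obtain x where "x \<in> E" "x < y"
    using cInf_less_iff[OF assms(1,2)] by blast
  then show "y \<in> E"
    using up y by simp
qed

lemma norm_diff_sum_indicator_le: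
  fixes s :: "'a \<Rightarrow> 'f::real_normed_field" and U :: "'f \<Rightarrow> 'a \<Rightarrow> real"
  assumes "finite (range s)" "\<And>v x. 0 \<le> U v x \<and> U v x \<le> 1"
  shows "(norm (s x - (\<Sum>v\<in>range s. v * of_real (U v x))))\<^sup>2 \<le>
    (\<Sum>v\<in>range s. norm v) * (\<Sum>v\<in>range s. norm v * \<bar>indicator (s -` {v}) x - U v x\<bar>)"
proof -
  define D where "D = (\<Sum>v\<in>range s. norm v * \<bar>indicator (s -` {v}) x - U v x\<bar>)"
  have "(\<Sum>v\<in>range s. v * of_real (indicator (s -` {v}) x)) = (\<Sum>v\<in>range s. if v = s x then v else 0)"
    by (intro sum.cong) (auto simp: indicator_def)
  also have "\<dots> = s x"
    using assms(1) by simp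
  finally have s_eq: "s x = (\<Sum>v\<in>range s. v * of_real (indicator (s -` {v}) x))"
    by simp
  have "norm (s x - (\<Sum>v\<in>range s. v * of_real (U v x))) =
      norm (\<Sum>v\<in>range s. v * of_real (indicator (s -` {v}) x - U v x))"
    by (subst s_eq) (simp add: sum_subtractf[symmetric] right_diff_distrib)
  also have "\<dots> \<le> D"
    unfolding D_def
    by (rule order_trans[OF norm_sum]) (simp add: norm_mult of_real_diff[symmetric] del: of_real_diff)
  finally have "norm (s x - (\<Sum>v\<in>range s. v * of_real (U v x))) \<le> D" .
  moreover have "D \<le> (\<Sum>v\<in>range s. norm v)"
    unfolding D_def using assms(2)
    by (intro sum_mono) (auto simp: indicator_def intro!: mult_right_le_one_le)
  ultimately show ?thesis
    unfolding D_def[symmetric] by (simp add: power2_eq_square mult_mono')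
qed

lemma clip_abs_diff_le: "\<bar>max 0 (min 1 s) - max 0 (min 1 t)\<bar> \<le> \<bar>s - t :: real\<bar>"
  by (simp add: max_def min_def abs_if)

context derivator_interval
begin

definition L2g_sqdist :: "(real \<Rightarrow> 'f::real_normed_vector) \<Rightarrow> (real \<Rightarrow> 'f) \<Rightarrow> ennreal" where
  "L2g_sqdist f h = (\<integral>\<^sup>+ x \<in> {a..<b}. ennreal ((norm (f x - h x))\<^sup>2) \<partial>M)"

lemma L2g_sqdist_triangle:
  fixes f k h :: "real \<Rightarrow> 'f::{real_normed_vector, second_countable_topology}"
  assumes [measurable]: "f \<in> borel_measurable (completion M)" "k \<in> borel_measurable (completion M)"
    "h \<in> borel_measurable (completion M)"
  shows "L2g_sqdist f h \<le> 2 * L2g_sqdist f k + 2 * L2g_sqdist k h"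
proof -
  have [measurable]: "{a..<b} \<in> sets (completion M)"
    by simp
  have sq: "(norm (f x - h x))\<^sup>2 \<le> 2 * (norm (f x - k x))\<^sup>2 + 2 * (norm (k x - h x))\<^sup>2" for x
  proof -
    have "norm (f x - h x) \<le> norm (f x - k x) + norm (k x - h x)"
      using norm_triangle_ineq[of "f x - k x" "k x - h x"] by simp
    then have "(norm (f x - h x))\<^sup>2 \<le> (norm (f x - k x) + norm (k x - h x))\<^sup>2"
      by (intro power_mono) auto
    also have "\<dots> \<le> 2 * (norm (f x - k x))\<^sup>2 + 2 * (norm (k x - h x))\<^sup>2"
      using sum_squares_ge_zero[of "norm (f x - k x) - norm (k x - h x)" 0]
      by (simp add: power2_eq_square algebra_simps)
    finally show ?thesis .
  qed
  have pw: "ennreal ((norm (f x - h x))\<^sup>2) \<le>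
      2 * ennreal ((norm (f x - k x))\<^sup>2) + 2 * ennreal ((norm (k x - h x))\<^sup>2)" for x
    using ennreal_leI[OF sq[of x]] by (simp add: ennreal_mult')
  have pwi: "ennreal ((norm (f x - h x))\<^sup>2) * indicator {a..<b} x \<le>
      2 * (ennreal ((norm (f x - k x))\<^sup>2) * indicator {a..<b} x) +
      2 * (ennreal ((norm (k x - h x))\<^sup>2) * indicator {a..<b} x)" for x
    using pw[of x] by (simp add: indicator_def)
  have "L2g_sqdist f h \<le> (\<integral>\<^sup>+ x. 2 * (ennreal ((norm (f x - k x))\<^sup>2) * indicator {a..<b} x) +
      2 * (ennreal ((norm (k x - h x))\<^sup>2) * indicator {a..<b} x) \<partial>completion M)"
    unfolding L2g_sqdist_def nn_integral_completion[of M, symmetric] by (rule nn_integral_mono[OF pwi])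
  also have "\<dots> = (\<integral>\<^sup>+ x. 2 * (ennreal ((norm (f x - k x))\<^sup>2) * indicator {a..<b} x) \<partial>completion M) +
      (\<integral>\<^sup>+ x. 2 * (ennreal ((norm (k x - h x))\<^sup>2) * indicator {a..<b} x) \<partial>completion M)"
    by (rule nn_integral_add) measurable
  also have "\<dots> = 2 * L2g_sqdist f k + 2 * L2g_sqdist k h"
    unfolding L2g_sqdist_def nn_integral_completion[of M, symmetric]
    by (intro arg_cong2[where f="(+)"] nn_integral_cmult) measurable
  finally show ?thesis .
qed

lemma L2g_sqdist_le_uniform:
  assumes "\<And>x. x \<in> {a..b} \<Longrightarrow> norm (w x - p x) \<le> r"
  shows "L2g_sqdist w p \<le> ennreal (r\<^sup>2 * measure M UNIV)"
proof -
  have "L2g_sqdist w p \<le> (\<integral>\<^sup>+ x. ennreal (r\<^sup>2) * indicator {a..<b} x \<partial>M)"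
    unfolding L2g_sqdist_def
  proof (intro nn_integral_mono)
    fix x
    show "ennreal ((norm (w x - p x))\<^sup>2) * indicator {a..<b} x \<le> ennreal (r\<^sup>2) * indicator {a..<b} x"
      using assms[of x] by (auto simp: indicator_def intro!: ennreal_leI power_mono)
  qed
  also have "\<dots> = ennreal (r\<^sup>2) * emeasure M {a..<b}"
    by (simp add: nn_integral_cmult_indicator)
  also have "\<dots> \<le> ennreal (r\<^sup>2) * emeasure M UNIV"
    by (intro mult_left_mono emeasure_mono) auto
  also have "\<dots> = ennreal (r\<^sup>2 * measure M UNIV)"
    by (simp add: emeasure_eq_measure ennreal_mult)
  finally show ?thesis .
qed

text \<open>For \<open>[0, 1]\<close>-valued \<open>u\<close> the \<open>L\<^sup>1\<close> error bounds the \<open>L\<^sup>2\<close> error, and it is additive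
  over disjoint unions.\<close>

definition UCg_approximable :: "real set \<Rightarrow> bool" where
  "UCg_approximable A \<longleftrightarrow> (\<forall>\<epsilon>>0. \<exists>u::real \<Rightarrow> real. u \<in> borel_measurable borel \<and> UCg g a b u \<and>
     (\<forall>x. 0 \<le> u x \<and> u x \<le> 1) \<and>
     (\<integral>\<^sup>+ x \<in> {a..<b}. ennreal \<bar>indicator A x - u x\<bar> \<partial>M) < ennreal \<epsilon>)"

lemma UCg_approximable_choice:
  assumes "\<And>i. UCg_approximable (A i)" "0 < c"
  obtains U :: "'i \<Rightarrow> real \<Rightarrow> real" where "\<And>i. U i \<in> borel_measurable borel" "\<And>i. UCg g a b (U i)"
    "\<And>i x. 0 \<le> U i x" "\<And>i x. U i x \<le> 1"
    "\<And>i. (\<integral>\<^sup>+ x \<in> {a..<b}. ennreal \<bar>indicator (A i) x - U i x\<bar> \<partial>M) < ennreal c"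
proof -
  have "\<forall>i. \<exists>u::real \<Rightarrow> real. u \<in> borel_measurable borel \<and> UCg g a b u \<and>
      (\<forall>x. 0 \<le> u x \<and> u x \<le> 1) \<and> (\<integral>\<^sup>+ x \<in> {a..<b}. ennreal \<bar>indicator (A i) x - u x\<bar> \<partial>M) < ennreal c"
    using assms unfolding UCg_approximable_def by blast
  from choice[OF this] obtain U where "\<forall>i. U i \<in> borel_measurable borel \<and>
      UCg g a b (U i) \<and> (\<forall>x. 0 \<le> U i x \<and> U i x \<le> 1) \<and>
      (\<integral>\<^sup>+ x \<in> {a..<b}. ennreal \<bar>indicator (A i) x - U i x\<bar> \<partial>M) < ennreal c"
    by blast
  then show ?thesis
    using that by blast
qed

lemma emeasure_upper_set_le:
  assumes E_sub: "\<And>x. x \<in> E \<Longrightarrow> a \<le> x \<and> x < c"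
    and up: "\<And>x y. x \<in> E \<Longrightarrow> x \<le> y \<Longrightarrow> y < c \<Longrightarrow> y \<in> E"
    and bound: "\<And>x. x \<in> E \<Longrightarrow> emeasure M {x..<c} \<le> r"
  shows "emeasure M E \<le> r"
proof (cases "E = {}")
  case False
  have "bdd_below E"
    using E_sub by (auto intro!: bdd_belowI[of _ a])
  show ?thesis
  proof (cases "Inf E \<in> E")
    case True
    have "E = {Inf E..<c}"
      using E_sub up[OF True] cInf_lower[OF _ \<open>bdd_below E\<close>] by fastforce
    then show ?thesis
      using bound[OF True] by simp
  next
    case False
    have E_eq: "E = (\<Union>n. {Inf E + 1 / Suc n..<c})"
      by (rule upper_set_eq_UN_Ico[OF \<open>E \<noteq> {}\<close> \<open>bdd_below E\<close> False _ up]) (use E_sub in auto)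
    have "incseq (\<lambda>n. {Inf E + 1 / Suc n..<c})"
    proof (intro monoI subsetI)
      fix m n :: nat and x
      assume "m \<le> n" "x \<in> {Inf E + 1 / Suc m..<c}"
      moreover have "1 / real (Suc n) \<le> 1 / real (Suc m)"
        using \<open>m \<le> n\<close> by (intro divide_left_mono) auto
      ultimately show "x \<in> {Inf E + 1 / Suc n..<c}" by auto
    qed
    then have "emeasure M E = (SUP n. emeasure M {Inf E + 1 / Suc n..<c})"
      by (subst E_eq, intro SUP_emeasure_incseq[symmetric]) auto
    also have "\<dots> \<le> r"
    proof (rule SUP_least)
      fix n
      show "emeasure M {Inf E + 1 / Suc n..<c} \<le> r"
      proof (cases "Inf E + 1 / Suc n < c")
        case True
        then have "Inf E + 1 / Suc n \<in> E"
          by (subst E_eq) auto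
        then show ?thesis by (rule bound)
      qed simp
    qed
    finally show ?thesis .
  qed
qed simp

definition ramp :: "real \<Rightarrow> real \<Rightarrow> real \<Rightarrow> real" where
  "ramp c \<eta> x = max 0 (min 1 ((gext g a b c - gext g a b x) / \<eta>))"

lemma borel_measurable_ramp [measurable]: "ramp c \<eta> \<in> borel_measurable borel"
  unfolding ramp_def[abs_def] by measurable

lemma ramp_bounds: "0 \<le> ramp c \<eta> x" "ramp c \<eta> x \<le> 1"
  by (auto simp: ramp_def)

lemma UCg_ramp:
  assumes "\<eta> > 0"
  shows "UCg g a b (ramp c \<eta>)"
proof -
  have "\<bar>max 0 (min 1 ((gext g a b c - s) / \<eta>)) - max 0 (min 1 ((gext g a b c - t) / \<eta>))\<bar> \<le>
      (1 / \<eta>) * \<bar>s - t\<bar>" for s t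
  proof -
    have "\<bar>max 0 (min 1 ((gext g a b c - s) / \<eta>)) - max 0 (min 1 ((gext g a b c - t) / \<eta>))\<bar> \<le>
        \<bar>(gext g a b c - s) / \<eta> - (gext g a b c - t) / \<eta>\<bar>"
      by (rule clip_abs_diff_le)
    also have "\<dots> = (1 / \<eta>) * \<bar>s - t\<bar>"
      using assms by (simp add: abs_minus_commute flip: diff_divide_distrib)
    finally show ?thesis .
  qed
  then show ?thesis
    unfolding ramp_def[abs_def] using assms
    by (intro UCg_comp_Lipschitz[OF UCg_gext, where L="1 / \<eta>"]) simp_all
qed

text \<open>The ramp differs from the indicator of \<open>{..<c}\<close> only on the set of \<open>x < c\<close> with
  \<open>gext g a b c - \<eta> < gext g a b x\<close>, whose measure is at most \<open>\<eta>\<close>.\<close>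

lemma nn_integral_ramp_error:
  assumes "\<eta> > 0"
  shows "(\<integral>\<^sup>+ x \<in> {a..<b}. ennreal \<bar>indicator {..<c} x - ramp c \<eta> x\<bar> \<partial>M) \<le> ennreal \<eta>"
proof -
  let ?G = "gext g a b"
  define E where "E = {x. a \<le> x \<and> x < c \<and> ?G c - \<eta> < ?G x}"
  have [measurable]: "E \<in> sets borel"
    unfolding E_def by measurable
  have "ennreal \<bar>indicator {..<c} x - ramp c \<eta> x\<bar> * indicator {a..<b} x \<le> indicator E x" for x
  proof (cases "a \<le> x \<and> x < b \<and> x < c")
    case True
    show ?thesis
    proof (cases "?G x \<le> ?G c - \<eta>")
      case True
      then have "ramp c \<eta> x = 1"
        using assms by (simp add: ramp_def field_simps)
      then show ?thesis
        using \<open>a \<le> x \<and> x < b \<and> x < c\<close> by (simp add: indicator_def)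
    next
      case False
      then show ?thesis
        using True ramp_bounds[of c \<eta> x] by (auto simp: E_def indicator_def)
    qed
  next
    case False
    moreover have "ramp c \<eta> x = 0" if "c \<le> x"
      using gext_mono[OF that] assms by (simp add: ramp_def divide_nonpos_pos)
    ultimately show ?thesis
      by (auto simp: indicator_def)
  qed
  then have "(\<integral>\<^sup>+ x \<in> {a..<b}. ennreal \<bar>indicator {..<c} x - ramp c \<eta> x\<bar> \<partial>M) \<le> emeasure M E"
    by (simp add: nn_integral_mono flip: nn_integral_indicator)
  also have "\<dots> \<le> ennreal \<eta>"
  proof (rule emeasure_upper_set_le)
    show "a \<le> x \<and> x < c" if "x \<in> E" for x
      using that unfolding E_def by auto
    show "y \<in> E" if "x \<in> E" "x \<le> y" "y < c" for x y
      using that gext_mono[of x y] unfolding E_def by auto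
    show "emeasure M {x..<c} \<le> ennreal \<eta>" if "x \<in> E" for x
      using that emeasure_Ico[of x c] unfolding E_def by (auto intro: ennreal_leI)
  qed
  finally show ?thesis .
qed

lemma UCg_approximable_lessThan: "UCg_approximable {..<c}"
  unfolding UCg_approximable_def
proof (intro allI impI)
  fix \<epsilon> :: real
  assume "\<epsilon> > 0"
  then have "(\<integral>\<^sup>+ x \<in> {a..<b}. ennreal \<bar>indicator {..<c} x - ramp c (\<epsilon> / 2) x\<bar> \<partial>M) < ennreal \<epsilon>"
    using nn_integral_ramp_error[of "\<epsilon> / 2" c] by (simp add: ennreal_lessI order.strict_trans1)
  then show "\<exists>u. u \<in> borel_measurable borel \<and> UCg g a b u \<and> (\<forall>x. 0 \<le> u x \<and> u x \<le> 1) \<and>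
      (\<integral>\<^sup>+ x \<in> {a..<b}. ennreal \<bar>indicator {..<c} x - u x\<bar> \<partial>M) < ennreal \<epsilon>"
    using \<open>\<epsilon> > 0\<close> ramp_bounds UCg_ramp[of "\<epsilon> / 2" c] by (intro exI[of _ "ramp c (\<epsilon> / 2)"]) auto
qed

lemma UCg_approximable_empty: "UCg_approximable {}"
  unfolding UCg_approximable_def
  by (intro allI impI exI[of _ "\<lambda>_. 0"]) (auto intro: UCg_const)

lemma UCg_approximable_Compl:
  assumes "UCg_approximable A"
  shows "UCg_approximable (UNIV - A)"
  unfolding UCg_approximable_def
proof (intro allI impI)
  fix \<epsilon> :: real
  assume "\<epsilon> > 0"
  then obtain u :: "real \<Rightarrow> real" where [measurable]: "u \<in> borel_measurable borel"
    and u: "UCg g a b u" "\<forall>x. 0 \<le> u x \<and> u x \<le> 1"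
    "(\<integral>\<^sup>+ x \<in> {a..<b}. ennreal \<bar>indicator A x - u x\<bar> \<partial>M) < ennreal \<epsilon>"
    using assms unfolding UCg_approximable_def by blast
  have "UCg g a b (\<lambda>x. (\<lambda>s. 1 - s) (u x))"
    by (rule UCg_comp_Lipschitz[OF u(1), where L=1]) (auto simp: abs_minus_commute)
  moreover have "(\<integral>\<^sup>+ x \<in> {a..<b}. ennreal \<bar>indicator (UNIV - A) x - (1 - u x)\<bar> \<partial>M) =
      (\<integral>\<^sup>+ x \<in> {a..<b}. ennreal \<bar>indicator A x - u x\<bar> \<partial>M)"
    by (intro nn_integral_cong) (auto simp: indicator_def abs_minus_commute)
  ultimately show "\<exists>v. v \<in> borel_measurable borel \<and> UCg g a b v \<and> (\<forall>x. 0 \<le> v x \<and> v x \<le> 1) \<and>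
      (\<integral>\<^sup>+ x \<in> {a..<b}. ennreal \<bar>indicator (UNIV - A) x - v x\<bar> \<partial>M) < ennreal \<epsilon>"
    using u by (intro exI[of _ "\<lambda>x. 1 - u x"]) auto
qed

end

lemma abs_indicator_UN_minus_min_le:
  fixes A :: "nat \<Rightarrow> 'a set" and U :: "nat \<Rightarrow> 'a \<Rightarrow> real"
  assumes "disjoint_family A" "\<And>i. 0 \<le> U i x"
  shows "\<bar>indicator (\<Union>i. A i) x - min 1 (\<Sum>i<N. U i x)\<bar> \<le>
    indicator ((\<Union>i. A i) - (\<Union>i<N. A i)) x + (\<Sum>i<N. \<bar>indicator (A i) x - U i x\<bar>)"
proof -
  define T where "T = (\<Sum>i<N. indicator (A i) x :: real)"
  have T: "indicator (\<Union>i<N. A i) x = T"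
    unfolding T_def using assms(1)
    by (intro indicator_UN_disjoint) (auto simp: disjoint_family_on_def)
  then have "0 \<le> T" "T \<le> 1"
    by (auto simp: indicator_def split: if_splits)
  moreover have "0 \<le> (\<Sum>i<N. U i x)"
    using assms(2) by (simp add: sum_nonneg)
  ultimately have "\<bar>T + d - min 1 (\<Sum>i<N. U i x)\<bar> \<le> d + \<bar>T - (\<Sum>i<N. U i x)\<bar>" if "0 \<le> d" for d
    using that by (simp add: min_def abs_if)
  moreover have "indicator (\<Union>i. A i) x = T + indicator ((\<Union>i. A i) - (\<Union>i<N. A i)) x"
    unfolding T[symmetric] by (auto simp: indicator_def)
  ultimately have "\<bar>indicator (\<Union>i. A i) x - min 1 (\<Sum>i<N. U i x)\<bar> \<le>
      indicator ((\<Union>i. A i) - (\<Union>i<N. A i)) x + \<bar>T - (\<Sum>i<N. U i x)\<bar>"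
    by simp
  also have "\<bar>T - (\<Sum>i<N. U i x)\<bar> \<le> (\<Sum>i<N. \<bar>indicator (A i) x - U i x\<bar>)"
    unfolding T_def by (metis sum_subtractf sum_abs)
  finally show ?thesis by simp
qed

context derivator_interval
begin

lemma emeasure_UN_diff_lessThan_small:
  fixes A :: "nat \<Rightarrow> real set"
  assumes "\<And>i. A i \<in> sets borel" "0 < e"
  obtains N where "emeasure M ((\<Union>i. A i) - (\<Union>i<N. A i)) < e"
proof -
  define D where "D N = (\<Union>i. A i) - (\<Union>i<N. A i)" for N
  have D_sets: "D N \<in> sets M" for N
    unfolding D_def using assms(1) by auto
  have "(\<lambda>N. emeasure M (D N)) \<longlonglongrightarrow> emeasure M (\<Inter>N. D N)"
  proof (rule Lim_emeasure_decseq)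
    show "decseq D"
      unfolding decseq_def D_def by auto
    show "emeasure M (D i) \<noteq> \<infinity>" for i
      using emeasure_finite by (simp add: top_unique)
  qed (use D_sets in auto)
  moreover have "(\<Inter>N. D N) = {}"
    unfolding D_def by auto
  ultimately have "(\<lambda>N. emeasure M (D N)) \<longlonglongrightarrow> 0"
    by simp
  then have "eventually (\<lambda>N. emeasure M (D N) < e) sequentially"
    using assms(2) by (rule order_tendstoD(2))
  then show ?thesis
    using that by (auto simp: D_def eventually_sequentially)
qed

lemma nn_integral_indicator_UN_minus_min_le:
  fixes A :: "nat \<Rightarrow> real set" and U :: "nat \<Rightarrow> real \<Rightarrow> real"
  assumes disj: "disjoint_family A" and [measurable]: "\<And>i. A i \<in> sets borel"
    and [measurable]: "\<And>i. U i \<in> borel_measurable borel" and U_nonneg: "\<And>i x. 0 \<le> U i x"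
  shows "(\<integral>\<^sup>+ x \<in> {a..<b}. ennreal \<bar>indicator (\<Union>i. A i) x - min 1 (\<Sum>i<N. U i x)\<bar> \<partial>M) \<le>
    emeasure M ((\<Union>i. A i) - (\<Union>i<N. A i)) +
    (\<Sum>i<N. \<integral>\<^sup>+ x \<in> {a..<b}. ennreal \<bar>indicator (A i) x - U i x\<bar> \<partial>M)"
proof -
  define D where "D = (\<Union>i. A i) - (\<Union>i<N. A i)"
  have D_sets [measurable]: "D \<in> sets M"
    unfolding D_def by auto
  have "ennreal \<bar>indicator (\<Union>i. A i) x - min 1 (\<Sum>i<N. U i x)\<bar> * indicator {a..<b} x \<le>
      indicator D x + (\<Sum>i<N. ennreal \<bar>indicator (A i) x - U i x\<bar> * indicator {a..<b} x)" for x
  proof -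
    have "\<bar>indicator (\<Union>i. A i) x - min 1 (\<Sum>i<N. U i x)\<bar> \<le>
        indicator D x + (\<Sum>i<N. \<bar>indicator (A i) x - U i x\<bar>)"
      unfolding D_def using disj U_nonneg by (rule abs_indicator_UN_minus_min_le)
    then have "ennreal \<bar>indicator (\<Union>i. A i) x - min 1 (\<Sum>i<N. U i x)\<bar> \<le>
        ennreal (indicator D x) + ennreal (\<Sum>i<N. \<bar>indicator (A i) x - U i x\<bar>)"
      by (simp add: ennreal_leI sum_nonneg flip: ennreal_plus)
    also have "ennreal (\<Sum>i<N. \<bar>indicator (A i) x - U i x\<bar>) = (\<Sum>i<N. ennreal \<bar>indicator (A i) x - U i x\<bar>)"
      by (rule sum_ennreal[symmetric]) simp
    also have "ennreal (indicator D x) = indicator D x"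
      by (simp add: indicator_def)
    finally show ?thesis
      by (cases "x \<in> {a..<b}") auto
  qed
  then have "(\<integral>\<^sup>+ x \<in> {a..<b}. ennreal \<bar>indicator (\<Union>i. A i) x - min 1 (\<Sum>i<N. U i x)\<bar> \<partial>M) \<le>
      (\<integral>\<^sup>+ x. indicator D x + (\<Sum>i<N. ennreal \<bar>indicator (A i) x - U i x\<bar> * indicator {a..<b} x) \<partial>M)"
    by (rule nn_integral_mono)
  also have "\<dots> = (\<integral>\<^sup>+ x. indicator D x \<partial>M) +
      (\<integral>\<^sup>+ x. (\<Sum>i<N. ennreal \<bar>indicator (A i) x - U i x\<bar> * indicator {a..<b} x) \<partial>M)"
    by (rule nn_integral_add) measurable
  also have "(\<integral>\<^sup>+ x. (\<Sum>i<N. ennreal \<bar>indicator (A i) x - U i x\<bar> * indicator {a..<b} x) \<partial>M) =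
      (\<Sum>i<N. \<integral>\<^sup>+ x \<in> {a..<b}. ennreal \<bar>indicator (A i) x - U i x\<bar> \<partial>M)"
    by (rule nn_integral_sum) measurable
  finally show ?thesis
    using D_sets by (simp add: D_def)
qed

lemma UCg_approximable_disjoint_UN:
  fixes A :: "nat \<Rightarrow> real set"
  assumes disj: "disjoint_family A" and [measurable]: "\<And>i. A i \<in> sets borel"
    and approx: "\<And>i. UCg_approximable (A i)"
  shows "UCg_approximable (\<Union>i. A i)"
  unfolding UCg_approximable_def
proof (intro allI impI)
  fix \<epsilon> :: real
  assume "\<epsilon> > 0"
  then obtain N where N: "emeasure M ((\<Union>i. A i) - (\<Union>i<N. A i)) < ennreal (\<epsilon> / 4)"
    using emeasure_UN_diff_lessThan_small[of A "ennreal (\<epsilon> / 4)"] by auto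
  define c where "c = \<epsilon> / (4 * (real N + 1))"
  have "c > 0" "real N * c \<le> \<epsilon> / 4"
    using \<open>\<epsilon> > 0\<close> by (auto simp: c_def field_simps)
  obtain U :: "nat \<Rightarrow> real \<Rightarrow> real" where [measurable]: "\<And>i. U i \<in> borel_measurable borel"
    and U: "\<And>i. UCg g a b (U i)" "\<And>i x. 0 \<le> U i x" "\<And>i x. U i x \<le> 1"
    "\<And>i. (\<integral>\<^sup>+ x \<in> {a..<b}. ennreal \<bar>indicator (A i) x - U i x\<bar> \<partial>M) < ennreal c"
    by (rule UCg_approximable_choice[where A=A, OF approx \<open>c > 0\<close>]) blast
  define u where "u x = min 1 (\<Sum>i<N. U i x)" for x
  have "UCg g a b (\<lambda>x. (\<lambda>s. min 1 s) (\<Sum>i<N. U i x))"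
    by (rule UCg_comp_Lipschitz[where L=1]) (auto intro: UCg_sum U(1) simp: min_def)
  then have "UCg g a b u"
    unfolding u_def[abs_def] .
  moreover have "\<And>x. 0 \<le> u x" "\<And>x. u x \<le> 1"
    using U(2) by (auto simp: u_def sum_nonneg)
  moreover have "(\<integral>\<^sup>+ x \<in> {a..<b}. ennreal \<bar>indicator (\<Union>i. A i) x - u x\<bar> \<partial>M) < ennreal \<epsilon>"
  proof -
    have "(\<integral>\<^sup>+ x \<in> {a..<b}. ennreal \<bar>indicator (\<Union>i. A i) x - u x\<bar> \<partial>M) \<le>
        emeasure M ((\<Union>i. A i) - (\<Union>i<N. A i)) +
        (\<Sum>i<N. \<integral>\<^sup>+ x \<in> {a..<b}. ennreal \<bar>indicator (A i) x - U i x\<bar> \<partial>M)"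
      unfolding u_def using disj U(2) by (intro nn_integral_indicator_UN_minus_min_le) auto
    also have "\<dots> \<le> ennreal (\<epsilon> / 4) + (\<Sum>i<N. ennreal c)"
      using N U(4) by (intro add_mono sum_mono less_imp_le) auto
    also have "\<dots> = ennreal (\<epsilon> / 4 + real N * c)"
      using \<open>c > 0\<close> \<open>\<epsilon> > 0\<close> by (simp add: ennreal_of_nat_eq_real_of_nat ennreal_mult)
    also have "\<dots> < ennreal \<epsilon>"
      using \<open>real N * c \<le> \<epsilon> / 4\<close> \<open>\<epsilon> > 0\<close> by (simp add: ennreal_lessI)
    finally show ?thesis .
  qed
  ultimately show "\<exists>u. u \<in> borel_measurable borel \<and> UCg g a b u \<and> (\<forall>x. 0 \<le> u x \<and> u x \<le> 1) \<and>
      (\<integral>\<^sup>+ x \<in> {a..<b}. ennreal \<bar>indicator (\<Union>i. A i) x - u x\<bar> \<partial>M) < ennreal \<epsilon>"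
    using \<open>\<And>x. 0 \<le> u x\<close> \<open>\<And>x. u x \<le> 1\<close> by (intro exI[of _ u]) (simp add: u_def[abs_def])
qed

lemma UCg_approximable_borel:
  assumes "A \<in> sets borel"
  shows "UCg_approximable A"
proof -
  have "Int_stable (range lessThan :: real set set)"
    unfolding Int_stable_def
  proof clarify
    fix c d :: real
    show "{..<c} \<inter> {..<d} \<in> range lessThan"
      by (rule image_eqI[of _ _ "min c d"]) auto
  qed
  moreover have "range lessThan \<subseteq> Pow (UNIV :: real set)"
    by simp
  moreover have "A \<in> sigma_sets UNIV (range lessThan)"
    using assms by (simp add: borel_Iio)
  ultimately show ?thesis
  proof (induction rule: sigma_sets_induct_disjoint)
    case (union A)
    then have "A i \<in> sets borel" for i
      by (auto simp: borel_Iio)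
    with union show ?case
      by (intro UCg_approximable_disjoint_UN)
  qed (auto intro: UCg_approximable_lessThan UCg_approximable_empty UCg_approximable_Compl)
qed

lemma UCg_approximable_completion:
  assumes "A \<in> sets (completion M)"
  shows "UCg_approximable A"
proof -
  obtain S N N' where A: "A = S \<union> N" "N \<subseteq> N'" "N' \<in> null_sets M" "S \<in> sets M"
    using sets_completionE[OF assms] by metis
  have "AE x in M. indicator A x = (indicator S x :: real)"
    using AE_not_in[OF A(3)] by eventually_elim (use A(1,2) in \<open>auto simp: indicator_def\<close>)
  then have "(\<integral>\<^sup>+ x \<in> {a..<b}. ennreal \<bar>indicator A x - u x\<bar> \<partial>M) =
      (\<integral>\<^sup>+ x \<in> {a..<b}. ennreal \<bar>indicator S x - u x\<bar> \<partial>M)" for u :: "real \<Rightarrow> real"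
    by (intro nn_integral_cong_AE) auto
  moreover have "UCg_approximable S"
    using A(4) by (intro UCg_approximable_borel) simp
  ultimately show ?thesis
    unfolding UCg_approximable_def by simp
qed

lemma L2g_sqdist_tendsto_0:
  fixes f :: "real \<Rightarrow> 'f::{real_normed_vector, second_countable_topology}"
  assumes [measurable]: "f \<in> borel_measurable (completion M)" "\<And>i. F i \<in> borel_measurable (completion M)"
    and F: "\<And>x. (\<lambda>i. F i x) \<longlonglongrightarrow> f x" "\<And>i x. norm (F i x) \<le> 2 * norm (f x)"
    and fL: "(\<integral>\<^sup>+ x \<in> {a..<b}. ennreal ((norm (f x))\<^sup>2) \<partial>M) < \<infinity>"
  shows "(\<lambda>i. L2g_sqdist f (F i)) \<longlonglongrightarrow> 0"
proof -
  have [measurable]: "{a..<b} \<in> sets (completion M)"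
    by simp
  have "(\<lambda>i. \<integral>\<^sup>+x. ennreal ((norm (f x - F i x))\<^sup>2) * indicator {a..<b} x \<partial>completion M) \<longlonglongrightarrow>
      (\<integral>\<^sup>+x. 0 \<partial>completion M)"
  proof (rule nn_integral_dominated_convergence[where w="\<lambda>x. ennreal 9 * (ennreal ((norm (f x))\<^sup>2) * indicator {a..<b} x)"])
    show "(\<lambda>x. ennreal ((norm (f x - F i x))\<^sup>2) * indicator {a..<b} x) \<in> borel_measurable (completion M)" for i
      by measurable
    show "(\<lambda>x. 0::ennreal) \<in> borel_measurable (completion M)" by simp
    show "(\<lambda>x. ennreal 9 * (ennreal ((norm (f x))\<^sup>2) * indicator {a..<b} x)) \<in> borel_measurable (completion M)"
      by measurable
    show "AE x in completion M. ennreal ((norm (f x - F j x))\<^sup>2) * indicator {a..<b} x \<le>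
        ennreal 9 * (ennreal ((norm (f x))\<^sup>2) * indicator {a..<b} x)" for j
    proof (intro AE_I2)
      fix x
      have "norm (f x - F j x) \<le> norm (f x) + norm (F j x)" by (rule norm_triangle_ineq4)
      also have "\<dots> \<le> 3 * norm (f x)" using F(2)[of j x] by simp
      finally have "(norm (f x - F j x))\<^sup>2 \<le> (3 * norm (f x))\<^sup>2" by (intro power_mono) auto
      then have "ennreal ((norm (f x - F j x))\<^sup>2) \<le> ennreal (9 * (norm (f x))\<^sup>2)"
        by (intro ennreal_leI) (simp add: power_mult_distrib)
      also have "ennreal (9 * (norm (f x))\<^sup>2) = ennreal 9 * ennreal ((norm (f x))\<^sup>2)"
        by (rule ennreal_mult) auto
      finally have "ennreal ((norm (f x - F j x))\<^sup>2) \<le> ennreal 9 * ennreal ((norm (f x))\<^sup>2)" .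
      then show "ennreal ((norm (f x - F j x))\<^sup>2) * indicator {a..<b} x \<le>
        ennreal 9 * (ennreal ((norm (f x))\<^sup>2) * indicator {a..<b} x)"
        by (auto simp: indicator_def)
    qed
    have "(\<integral>\<^sup>+x. ennreal 9 * (ennreal ((norm (f x))\<^sup>2) * indicator {a..<b} x) \<partial>completion M) =
        ennreal 9 * (\<integral>\<^sup>+x. ennreal ((norm (f x))\<^sup>2) * indicator {a..<b} x \<partial>completion M)"
      by (rule nn_integral_cmult) measurable
    also have "\<dots> = ennreal 9 * (\<integral>\<^sup>+x\<in>{a..<b}. ennreal ((norm (f x))\<^sup>2) \<partial>M)"
      by (simp add: nn_integral_completion)
    also have "\<dots> < \<infinity>" using fL by (simp add: ennreal_mult_less_top)
    finally show "(\<integral>\<^sup>+x. ennreal 9 * (ennreal ((norm (f x))\<^sup>2) * indicator {a..<b} x) \<partial>completion M) < \<infinity>" .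
    show "AE x in completion M. (\<lambda>i. ennreal ((norm (f x - F i x))\<^sup>2) * indicator {a..<b} x) \<longlonglongrightarrow> 0"
    proof (intro AE_I2)
      fix x
      have "(\<lambda>i. f x - F i x) \<longlonglongrightarrow> 0" using tendsto_diff[OF tendsto_const[of "f x"] F(1)[of x]] by simp
      then have "(\<lambda>i. (norm (f x - F i x))\<^sup>2) \<longlonglongrightarrow> (norm (0::'f))\<^sup>2"
        by (intro tendsto_intros)
      then have "(\<lambda>i. (norm (f x - F i x))\<^sup>2) \<longlonglongrightarrow> 0" by simp
      then have "(\<lambda>i. ennreal ((norm (f x - F i x))\<^sup>2)) \<longlonglongrightarrow> ennreal 0"
        by (rule tendsto_ennrealI)
      then show "(\<lambda>i. ennreal ((norm (f x - F i x))\<^sup>2) * indicator {a..<b} x) \<longlonglongrightarrow> 0"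
        by (cases "x \<in> {a..<b}") auto
    qed
  qed
  then show ?thesis
    unfolding L2g_sqdist_def by (simp add: nn_integral_completion)
qed

lemma simple_function_L2g_approx:
  fixes f :: "real \<Rightarrow> 'f::{real_normed_field, banach, second_countable_topology}"
  assumes f: "in_L2g g a b f" and "e > 0"
  obtains s where "simple_function (completion M) s" "L2g_sqdist f s < ennreal e"
proof -
  have fm: "f \<in> borel_measurable (completion M)"
    and fL: "(\<integral>\<^sup>+ x \<in> {a..<b}. ennreal ((norm (f x))\<^sup>2) \<partial>M) < \<infinity>"
    using f unfolding in_L2g_def by auto
  obtain F where F: "\<And>i. simple_function (completion M) (F i)" "\<And>x. (\<lambda>i. F i x) \<longlonglongrightarrow> f x"
    "\<And>i x. dist (F i x) 0 \<le> 2 * dist (f x) 0"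
    using borel_measurable_implies_sequence_metric[OF fm, of 0] by auto
  have "(\<lambda>i. L2g_sqdist f (F i)) \<longlonglongrightarrow> 0"
    using fm borel_measurable_simple_function[OF F(1)] F(2,3) fL by (intro L2g_sqdist_tendsto_0) auto
  then have "eventually (\<lambda>i. L2g_sqdist f (F i) < ennreal e) sequentially"
    using \<open>e > 0\<close> by (intro order_tendstoD(2)) auto
  then show ?thesis
    using that F(1) by (auto simp: eventually_sequentially)
qed

lemma L2g_sqdist_simple_le:
  fixes s :: "real \<Rightarrow> 'f::{real_normed_field, second_countable_topology}"
  assumes s: "simple_function (completion M) s"
    and [measurable]: "\<And>v. U v \<in> borel_measurable borel"
    and U01: "\<And>v x. 0 \<le> U v x \<and> U v x \<le> 1"
    and U_close: "\<And>v. v \<in> range s \<Longrightarrow>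
      (\<integral>\<^sup>+ x \<in> {a..<b}. ennreal \<bar>indicator (s -` {v}) x - U v x\<bar> \<partial>M) \<le> ennreal \<delta>"
    and "0 \<le> \<delta>"
  shows "L2g_sqdist s (\<lambda>x. \<Sum>v\<in>range s. v * of_real (U v x)) \<le> ennreal ((\<Sum>v\<in>range s. norm v)\<^sup>2 * \<delta>)"
proof -
  define K where "K = (\<Sum>v\<in>range s. norm v)"
  have "finite (range s)"
    using simple_functionD(1)[OF s] by simp
  have "0 \<le> K"
    unfolding K_def by (simp add: sum_nonneg)
  have [measurable]: "s -` {v} \<in> sets (completion M)" for v
    using simple_functionD(2)[OF s, of "{v}"] by simp
  have [measurable]: "{a..<b} \<in> sets (completion M)"
    by simp
  have [measurable]: "s \<in> borel_measurable (completion M)"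
    by (rule borel_measurable_simple_function[OF s])
  have [measurable]: "U v \<in> borel_measurable (completion M)" for v
    by (rule measurable_completion) measurable
  have "ennreal ((norm (s x - (\<Sum>v\<in>range s. v * of_real (U v x))))\<^sup>2) * indicator {a..<b} x \<le>
      (\<Sum>v\<in>range s. ennreal (K * norm v) * (ennreal \<bar>indicator (s -` {v}) x - U v x\<bar> * indicator {a..<b} x))"
    for x
  proof -
    have "ennreal ((norm (s x - (\<Sum>v\<in>range s. v * of_real (U v x))))\<^sup>2) \<le>
        ennreal (K * (\<Sum>v\<in>range s. norm v * \<bar>indicator (s -` {v}) x - U v x\<bar>))"
      unfolding K_def by (intro ennreal_leI norm_diff_sum_indicator_le \<open>finite (range s)\<close> U01)
    also have "\<dots> = (\<Sum>v\<in>range s. ennreal (K * norm v) * ennreal \<bar>indicator (s -` {v}) x - U v x\<bar>)"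
      unfolding sum_distrib_left using \<open>0 \<le> K\<close>
      by (subst sum_ennreal[symmetric]) (auto simp: ennreal_mult mult.assoc)
    finally show ?thesis
      by (cases "x \<in> {a..<b}") auto
  qed
  then have "L2g_sqdist s (\<lambda>x. \<Sum>v\<in>range s. v * of_real (U v x)) \<le>
      (\<integral>\<^sup>+ x. (\<Sum>v\<in>range s. ennreal (K * norm v) *
        (ennreal \<bar>indicator (s -` {v}) x - U v x\<bar> * indicator {a..<b} x)) \<partial>completion M)"
    unfolding L2g_sqdist_def nn_integral_completion[of M, symmetric] by (rule nn_integral_mono)
  also have "\<dots> = (\<Sum>v\<in>range s. ennreal (K * norm v) *
      (\<integral>\<^sup>+ x \<in> {a..<b}. ennreal \<bar>indicator (s -` {v}) x - U v x\<bar> \<partial>completion M))"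
  proof (subst nn_integral_sum)
    show "(\<lambda>x. ennreal (K * norm v) * (ennreal \<bar>indicator (s -` {v}) x - U v x\<bar> * indicator {a..<b} x))
        \<in> borel_measurable (completion M)" for v
      by measurable
    show "(\<Sum>v\<in>range s. \<integral>\<^sup>+ x. ennreal (K * norm v) *
          (ennreal \<bar>indicator (s -` {v}) x - U v x\<bar> * indicator {a..<b} x) \<partial>completion M) =
        (\<Sum>v\<in>range s. ennreal (K * norm v) *
          (\<integral>\<^sup>+ x \<in> {a..<b}. ennreal \<bar>indicator (s -` {v}) x - U v x\<bar> \<partial>completion M))"
      by (intro sum.cong refl nn_integral_cmult) measurable
  qed
  also have "\<dots> \<le> (\<Sum>v\<in>range s. ennreal (K * norm v) * ennreal \<delta>)"
    using U_close by (intro sum_mono mult_left_mono) (auto simp: nn_integral_completion)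
  also have "\<dots> = ennreal (K\<^sup>2 * \<delta>)"
    using \<open>0 \<le> K\<close> \<open>0 \<le> \<delta>\<close>
    by (simp add: ennreal_mult[symmetric] sum_distrib_right[symmetric] K_def sum_distrib_left power2_eq_square
        del: ennreal_mult)
  finally show ?thesis
    by (simp add: K_def)
qed

lemma UCg_dense_L2g:
  fixes f :: "real \<Rightarrow> 'f::{real_normed_field, banach, second_countable_topology}"
  assumes f: "in_L2g g a b f" and "e > 0"
  obtains w where "w \<in> borel_measurable borel" "UCg g a b w" "L2g_sqdist f w \<le> ennreal e"
proof -
  obtain s where s: "simple_function (completion M) s" and fs: "L2g_sqdist f s < ennreal (e / 4)"
    using simple_function_L2g_approx[OF f] \<open>e > 0\<close> by (metis divide_pos_pos zero_less_numeral)
  define K where "K = (\<Sum>v\<in>range s. norm v)"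
  define \<delta> where "\<delta> = e / (4 * (K\<^sup>2 + 1))"
  have "0 < K\<^sup>2 + 1"
    by (simp add: add_nonneg_pos)
  then have "\<delta> > 0"
    using \<open>e > 0\<close> by (simp add: \<delta>_def)
  have "K\<^sup>2 * \<delta> = e / 4 * (K\<^sup>2 / (K\<^sup>2 + 1))"
    by (simp add: \<delta>_def)
  also have "\<dots> \<le> e / 4 * 1"
    using \<open>0 < K\<^sup>2 + 1\<close> \<open>e > 0\<close> by (intro mult_left_mono) auto
  finally have "K\<^sup>2 * \<delta> \<le> e / 4"
    by simp
  have approx: "UCg_approximable (s -` {v})" for v
    using simple_functionD(2)[OF s, of "{v}"] by (intro UCg_approximable_completion) simp
  obtain U :: "'f \<Rightarrow> real \<Rightarrow> real" where [measurable]: "\<And>v. U v \<in> borel_measurable borel"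
    and U: "\<And>v. UCg g a b (U v)" "\<And>v x. 0 \<le> U v x" "\<And>v x. U v x \<le> 1"
    "\<And>v. (\<integral>\<^sup>+ x \<in> {a..<b}. ennreal \<bar>indicator (s -` {v}) x - U v x\<bar> \<partial>M) < ennreal \<delta>"
    by (rule UCg_approximable_choice[where A="\<lambda>v. s -` {v}", OF approx \<open>\<delta> > 0\<close>]) blast
  define w where "w x = (\<Sum>v\<in>range s. v * of_real (U v x))" for x
  have "finite (range s)"
    using simple_functionD(1)[OF s] by simp
  then have "UCg g a b w"
    unfolding w_def[abs_def] by (intro UCg_sum UCg_mult_of_real U(1))
  moreover have [measurable]: "w \<in> borel_measurable borel"
    unfolding w_def[abs_def] by measurable
  moreover have "L2g_sqdist f w \<le> ennreal e"
  proof -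
    have [measurable]: "s \<in> borel_measurable (completion M)"
      by (rule borel_measurable_simple_function[OF s])
    have "L2g_sqdist s w \<le> ennreal (K\<^sup>2 * \<delta>)"
      unfolding w_def[abs_def] K_def using \<open>\<delta> > 0\<close> U(2,3,4)
      by (intro L2g_sqdist_simple_le[OF s]) (auto intro: less_imp_le)
    also have "\<dots> \<le> ennreal (e / 4)"
      using \<open>K\<^sup>2 * \<delta> \<le> e / 4\<close> by (rule ennreal_leI)
    finally have "L2g_sqdist s w \<le> ennreal (e / 4)" .
    have "L2g_sqdist f w \<le> 2 * L2g_sqdist f s + 2 * L2g_sqdist s w"
      using f unfolding in_L2g_def by (intro L2g_sqdist_triangle) (auto intro: measurable_completion)
    also have "\<dots> \<le> 2 * ennreal (e / 4) + 2 * ennreal (e / 4)"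
      using fs \<open>L2g_sqdist s w \<le> ennreal (e / 4)\<close> by (intro add_mono mult_left_mono) auto
    also have "\<dots> = ennreal (2 * (e / 4) + 2 * (e / 4))"
      using \<open>e > 0\<close> by (simp add: numeral_mult_ennreal flip: ennreal_plus)
    finally show ?thesis
      by simp
  qed
  ultimately show ?thesis
    using that by blast
qed

lemma UC_dense_imp_L2_dense:
  fixes P :: "(real \<Rightarrow> 'f::{real_normed_field, banach, second_countable_topology}) set"
  defines "P \<equiv> gpolys g a b"
  assumes "dense_UCg g a b P"
  shows "dense_L2g g a b P"
  unfolding dense_L2g_def
proof (intro allI impI)
  fix f :: "real \<Rightarrow> 'f" and e :: real
  assume f: "in_L2g g a b f" and "e > 0"
  obtain w where [measurable]: "w \<in> borel_measurable borel" and "UCg g a b w"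
    and fw: "L2g_sqdist f w \<le> ennreal (e / 4)"
    using UCg_dense_L2g[OF f] \<open>e > 0\<close> by (metis divide_pos_pos zero_less_numeral)
  define m where "m = measure M UNIV"
  define r where "r = sqrt (e / (8 * (m + 1)))"
  have "m \<ge> 0"
    by (simp add: m_def)
  then have "r > 0" "r\<^sup>2 * m \<le> e / 8"
    using \<open>e > 0\<close> by (auto simp: r_def field_simps)
  then obtain p where p: "p \<in> P" and wp: "(SUP x\<in>{a..b}. ereal (norm (w x - p x))) < ereal r"
    using assms(2) \<open>UCg g a b w\<close> unfolding dense_UCg_def by blast
  have "norm (w x - p x) \<le> r" if "x \<in> {a..b}" for x
  proof -
    have "ereal (norm (w x - p x)) \<le> (SUP x\<in>{a..b}. ereal (norm (w x - p x)))"
      using that by (rule SUP_upper)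
    then have "ereal (norm (w x - p x)) < ereal r"
      using wp by (rule le_less_trans)
    then show ?thesis by simp
  qed
  then have "L2g_sqdist w p \<le> ennreal (e / 8)"
    using \<open>r\<^sup>2 * m \<le> e / 8\<close> unfolding m_def by (blast intro: order_trans L2g_sqdist_le_uniform ennreal_leI)
  have [measurable]: "p \<in> borel_measurable borel"
    using gpoly_borel_bounded p unfolding P_def by blast
  have "L2g_sqdist f p \<le> 2 * L2g_sqdist f w + 2 * L2g_sqdist w p"
    using f unfolding in_L2g_def by (intro L2g_sqdist_triangle) (auto intro: measurable_completion)
  also have "\<dots> \<le> 2 * ennreal (e / 4) + 2 * ennreal (e / 8)"
    using fw \<open>L2g_sqdist w p \<le> ennreal (e / 8)\<close> by (intro add_mono mult_left_mono) auto
  also have "\<dots> = ennreal (2 * (e / 4) + 2 * (e / 8))"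
    using \<open>e > 0\<close> by (simp add: numeral_mult_ennreal flip: ennreal_plus)
  also have "\<dots> < ennreal e"
    using \<open>e > 0\<close> by (intro ennreal_lessI) auto
  finally show "\<exists>p\<in>P. (\<integral>\<^sup>+ x \<in> {a..<b}. ennreal ((norm (f x - p x))\<^sup>2) \<partial>M) < ennreal e"
    using p unfolding L2g_sqdist_def by blast
qed

end

theorem mainTheorem7:
  assumes "derivator g a b"
  shows "(dense_L2g g a b (gpolys g a b :: (real \<Rightarrow> real) set) \<longleftrightarrow>
            dense_UCg g a b (gpolys g a b :: (real \<Rightarrow> real) set)) \<and>
         (dense_L2g g a b (gpolys g a b :: (real \<Rightarrow> complex) set) \<longleftrightarrow>
            dense_UCg g a b (gpolys g a b :: (real \<Rightarrow> complex) set))"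
proof -
  interpret derivator_interval g a b
    by unfold_locales (rule assms)
  show ?thesis
    using L2_dense_imp_UC_dense[where 'f=real] UC_dense_imp_L2_dense[where 'f=real]
      L2_dense_imp_UC_dense[where 'f=complex] UC_dense_imp_L2_dense[where 'f=complex]
    by blast
qed

end
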